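(* Let $\sharp\in\{cy,ra\}$ and assume (ER$\sharp$). Then for all $\boldsymbol\zeta,\alpha\in\mathbb R^M$ the map $\mathcal L^{[\alpha]*}_{\sharp,\boldsymbol\zeta}$ is a primitive completely positive map; in particular its spectral radius $r^\sharp_{\boldsymbol\zeta}(\alpha)$ is positive.
   Context: Finite-dimensional $\mathcal H_{\mathcal S},\mathcal H_{\mathcal E_j}$ ($j=1..M$), self-adjoint $H_{\mathcal S},H_{\mathcal E_j}$, self-adjoint $V_j$, $\tau_j>0$, $U_j=e^{-i\tau_j(H_{\mathcal S}\otimes\mathrm{Id}+\mathrm{Id}\otimes H_{\mathcal E_j}+V_j)}$; $\beta_{\rm ref}>0$; for $\boldsymbol\zeta\in\mathbb R^M$, $\rho_{\mathcal E_j}$ Gibbs state of $H_{\mathcal E_j}$ at $\beta_{\rm ref}-\zeta_j$; $\mathcal L_j(\rho)=\mathrm{Tr}_{\mathcal H_{\mathcal E_j}}(U_j(\rho\otimes\rho_{\mathcal E_j})U_j^* )$, $\mathcal L_{cy}=\mathcal L_M\circ\cdots\circ\mathcal L_1$, $\mathcal L_{ra}=\frac1M\sum\mathcal L_j$. Deformed maps $\mathcal L_j^{[\alpha]*}(X)=\mathrm{Tr}_{\mathcal H_{\mathcal E_j}}((\mathrm{Id}\otimes\rho_{\mathcal E_j}^{1-\alpha_j})U_j^*(X\otimes\rho_{\mathcal E_j}^{\alpha_j})U_j)$, $\mathcal L_{cy}^{[\alpha]*}=\mathcal L_1^{[\alpha]*}\circ\cdots\circ\mathcal L_M^{[\alpha]*}$,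 $\mathcal L_{ra}^{[\alpha]*}=\frac1M\sum\mathcal L_j^{[\alpha]*}$. A CP map with Kraus operators $V_i$ is primitive if for some $n$ the products $V_{i_1}\cdots V_{i_n}$ span all operators. (ER$\sharp$): $\mathcal L_{\sharp,\boldsymbol\zeta}$ is primitive for some $\boldsymbol\zeta$. *)

theory Defs
  imports "Jordan_Normal_Form.Spectral_Radius" "Jordan_Normal_Form.Schur_Decomposition"
begin

definition mexp :: "complex mat \<Rightarrow> complex mat" where
  "mexp A = mat (dim_row A) (dim_col A)
     (\<lambda>ij. (\<Sum>k. (A ^\<^sub>m k) $$ ij / of_nat (fact k)))"

text \<open>Kronecker (tensor) product; index (i,k) of H_S \<otimes> H_E is i * dim H_E + k.\<close>
definition kron :: "complex mat \<Rightarrow> complex mat \<Rightarrow> complex mat" where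
  "kron A B = mat (dim_row A * dim_row B) (dim_col A * dim_col B)
     (\<lambda>(i,j). A $$ (i div dim_row B, j div dim_col B) * B $$ (i mod dim_row B, j mod dim_col B))"

definition mtrace :: "complex mat \<Rightarrow> complex" where
  "mtrace A = (\<Sum>i<dim_row A. A $$ (i,i))"

definition ptrace2 :: "nat \<Rightarrow> nat \<Rightarrow> complex mat \<Rightarrow> complex mat" where
  "ptrace2 dS dE A = mat dS dS (\<lambda>(i,j). \<Sum>k<dE. A $$ (i * dE + k, j * dE + k))"

definition self_adjoint :: "nat \<Rightarrow> complex mat \<Rightarrow> bool" where
  "self_adjoint n A \<longleftrightarrow> A \<in> carrier_mat n n \<and> mat_adjoint A = A"

text \<open>Real powers of the Gibbs state rho = exp(-b H) / Tr exp(-b H):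
  rho^s = exp(-s b H) / Z^s with Z = Tr exp(-b H) > 0.  In particular gibbs_pow H b 1 = rho.\<close>
definition gibbs_pow :: "complex mat \<Rightarrow> real \<Rightarrow> real \<Rightarrow> complex mat" where
  "gibbs_pow H b s = complex_of_real (1 / (Re (mtrace (mexp ((- complex_of_real b) \<cdot>\<^sub>m H)))) powr s)
       \<cdot>\<^sub>m mexp ((- complex_of_real (s * b)) \<cdot>\<^sub>m H)"

definition gibbs :: "complex mat \<Rightarrow> real \<Rightarrow> complex mat" where
  "gibbs H b = gibbs_pow H b 1"

definition msum :: "nat \<Rightarrow> ('i \<Rightarrow> complex mat) \<Rightarrow> 'i set \<Rightarrow> complex mat" where
  "msum n f S = mat n n (\<lambda>ij. \<Sum>x\<in>S. f x $$ ij)"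

definition word_prod :: "nat \<Rightarrow> complex mat list \<Rightarrow> nat list \<Rightarrow> complex mat" where
  "word_prod n Ks w = foldr (\<lambda>i B. Ks ! i * B) w (1\<^sub>m n)"

definition words :: "nat \<Rightarrow> nat \<Rightarrow> nat list set" where
  "words k m = {w. length w = m \<and> set w \<subseteq> {..<k}}"

definition primitive_cp :: "nat \<Rightarrow> (complex mat \<Rightarrow> complex mat) \<Rightarrow> bool" where
  "primitive_cp n L \<longleftrightarrow>
     (\<exists>Ks. (\<forall>K\<in>set Ks. K \<in> carrier_mat n n) \<and>
           (\<forall>X\<in>carrier_mat n n. L X = msum n (\<lambda>i. Ks ! i * X * mat_adjoint (Ks ! i)) {..<length Ks}) \<and>
           (\<exists>m. \<forall>A\<in>carrier_mat n n. \<exists>c. A = msum n (\<lambda>w. c w \<cdot>\<^sub>m word_prod n Ks w) (words (length Ks) m)))"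

text \<open>Matrix of a linear map on n x n matrices w.r.t. the basis of matrix units E_(a,b),
  indexed by a * n + b; its spectral radius is the spectral radius of the map.\<close>
definition unit_mat :: "nat \<Rightarrow> nat \<Rightarrow> complex mat" where
  "unit_mat n q = mat n n (\<lambda>ij. if ij = (q div n, q mod n) then 1 else 0)"

definition superop_mat :: "nat \<Rightarrow> (complex mat \<Rightarrow> complex mat) \<Rightarrow> complex mat" where
  "superop_mat n L = mat (n * n) (n * n) (\<lambda>(p,q). L (unit_mat n q) $$ (p div n, p mod n))"

definition map_spectral_radius :: "nat \<Rightarrow> (complex mat \<Rightarrow> complex mat) \<Rightarrow> real" where
  "map_spectral_radius n L = spectral_radius (superop_mat n L)"

text \<open>Indices j = 0..M-1 correspond to j = 1..M of the paper.\<close>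

definition Uint :: "nat \<Rightarrow> nat \<Rightarrow> complex mat \<Rightarrow> complex mat \<Rightarrow> complex mat \<Rightarrow> real \<Rightarrow> complex mat" where
  "Uint dS dE HS HE V \<tau> =
     mexp ((- \<i> * complex_of_real \<tau>) \<cdot>\<^sub>m (kron HS (1\<^sub>m dE) + kron (1\<^sub>m dS) HE + V))"

definition Lj :: "nat \<Rightarrow> (nat \<Rightarrow> nat) \<Rightarrow> complex mat \<Rightarrow> (nat \<Rightarrow> complex mat) \<Rightarrow> (nat \<Rightarrow> complex mat)
   \<Rightarrow> (nat \<Rightarrow> real) \<Rightarrow> real \<Rightarrow> (nat \<Rightarrow> real) \<Rightarrow> nat \<Rightarrow> complex mat \<Rightarrow> complex mat" where
  "Lj dS dE HS HE V \<tau> \<beta> \<zeta> j X =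
     (let U = Uint dS (dE j) HS (HE j) (V j) (\<tau> j)
      in ptrace2 dS (dE j) (U * kron X (gibbs (HE j) (\<beta> - \<zeta> j)) * mat_adjoint U))"

definition Ljd :: "nat \<Rightarrow> (nat \<Rightarrow> nat) \<Rightarrow> complex mat \<Rightarrow> (nat \<Rightarrow> complex mat) \<Rightarrow> (nat \<Rightarrow> complex mat)
   \<Rightarrow> (nat \<Rightarrow> real) \<Rightarrow> real \<Rightarrow> (nat \<Rightarrow> real) \<Rightarrow> (nat \<Rightarrow> real) \<Rightarrow> nat \<Rightarrow> complex mat \<Rightarrow> complex mat" where
  "Ljd dS dE HS HE V \<tau> \<beta> \<zeta> \<alpha> j X =
     (let U = Uint dS (dE j) HS (HE j) (V j) (\<tau> j)
      in ptrace2 dS (dE j)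
           (kron (1\<^sub>m dS) (gibbs_pow (HE j) (\<beta> - \<zeta> j) (1 - \<alpha> j))
            * (mat_adjoint U * kron X (gibbs_pow (HE j) (\<beta> - \<zeta> j) (\<alpha> j)) * U)))"

fun comp_up :: "(nat \<Rightarrow> 'a \<Rightarrow> 'a) \<Rightarrow> nat \<Rightarrow> 'a \<Rightarrow> 'a" where
  "comp_up f 0 = id"
| "comp_up f (Suc m) = f m \<circ> comp_up f m"

fun comp_down :: "(nat \<Rightarrow> 'a \<Rightarrow> 'a) \<Rightarrow> nat \<Rightarrow> 'a \<Rightarrow> 'a" where
  "comp_down f 0 = id"
| "comp_down f (Suc m) = comp_down f m \<circ> f m"

definition avg_map :: "nat \<Rightarrow> nat \<Rightarrow> (nat \<Rightarrow> complex mat \<Rightarrow> complex mat) \<Rightarrow> complex mat \<Rightarrow> complex mat" where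
  "avg_map n M f X = (1 / of_nat M) \<cdot>\<^sub>m msum n (\<lambda>j. f j X) {..<M}"

datatype scheme = Cy | Ra

definition Lsh :: "scheme \<Rightarrow> nat \<Rightarrow> nat \<Rightarrow> (nat \<Rightarrow> nat) \<Rightarrow> complex mat \<Rightarrow> (nat \<Rightarrow> complex mat)
   \<Rightarrow> (nat \<Rightarrow> complex mat) \<Rightarrow> (nat \<Rightarrow> real) \<Rightarrow> real \<Rightarrow> (nat \<Rightarrow> real) \<Rightarrow> complex mat \<Rightarrow> complex mat" where
  "Lsh sh M dS dE HS HE V \<tau> \<beta> \<zeta> =
     (case sh of Cy \<Rightarrow> comp_up (Lj dS dE HS HE V \<tau> \<beta> \<zeta>) M
               | Ra \<Rightarrow> avg_map dS M (Lj dS dE HS HE V \<tau> \<beta> \<zeta>))"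

definition Lshd :: "scheme \<Rightarrow> nat \<Rightarrow> nat \<Rightarrow> (nat \<Rightarrow> nat) \<Rightarrow> complex mat \<Rightarrow> (nat \<Rightarrow> complex mat)
   \<Rightarrow> (nat \<Rightarrow> complex mat) \<Rightarrow> (nat \<Rightarrow> real) \<Rightarrow> real \<Rightarrow> (nat \<Rightarrow> real) \<Rightarrow> (nat \<Rightarrow> real)
   \<Rightarrow> complex mat \<Rightarrow> complex mat" where
  "Lshd sh M dS dE HS HE V \<tau> \<beta> \<zeta> \<alpha> =
     (case sh of Cy \<Rightarrow> comp_down (Ljd dS dE HS HE V \<tau> \<beta> \<zeta> \<alpha>) M
               | Ra \<Rightarrow> avg_map dS M (Ljd dS dE HS HE V \<tau> \<beta> \<zeta> \<alpha>))"

end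

theory Submission
  imports Defs
begin

text \<open>
  Each L_j and each L_j^[alpha]* has an explicit Kraus family, consisting of the partial matrix
  elements (Id \<otimes> <k|) W (Id \<otimes> |l>) of W = U_j (Id \<otimes> R), resp. W = (Id \<otimes> R') U_j^* (Id \<otimes> R''),
  where R, R', R'' are Hermitian square roots of powers of Gibbs states. As these are invertible,
  the Kraus operators of L_j lie in the span of the partial matrix elements B_kl of U_j, while the
  adjoints of the B_kl lie in the span of the Kraus operators of L_j^[alpha]*. The span of the
  Kraus operators of a CP map does not depend on the Kraus representation, and the adjoint of a
  product of Kraus operators is the reversed product of their adjoints. Hence if the products of
  length m of Kraus operators of L_(sh,zeta) span all matrices, so do those of L^[alpha]*_(sh,zeta'),
  for the cyclic as well as for the random scheme. Finally a primitive map is not nilpotent, since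
  L^k(1) is a sum of W W^* over words W spanning the identity; so its spectral radius is positive.
\<close>

section \<open>Matrix preliminaries\<close>

lemma mat_adjoint_altdef:
  "mat_adjoint (A :: complex mat) = mat (dim_col A) (dim_row A) (\<lambda>(i,j). cnj (A $$ (j,i)))"
  unfolding mat_adjoint_def mat_of_rows_def
  by (rule eq_matI, auto simp: cols_def conjugate_vec_def)

lemma mat_adjoint_dim[simp]:
  "dim_row (mat_adjoint (A :: complex mat)) = dim_col A"
  "dim_col (mat_adjoint (A :: complex mat)) = dim_row A"
  by (simp_all add: mat_adjoint_altdef)

lemma index_mat_adjoint[simp]:
  "i < dim_col A \<Longrightarrow> j < dim_row A \<Longrightarrow> mat_adjoint (A :: complex mat) $$ (i,j) = cnj (A $$ (j,i))"
  by (simp add: mat_adjoint_altdef)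

lemma mat_adjoint_carrier[simp]: "A \<in> carrier_mat n m \<Longrightarrow> mat_adjoint (A :: complex mat) \<in> carrier_mat m n"
  unfolding carrier_mat_def by simp

lemma mat_adjoint_adjoint[simp]: "mat_adjoint (mat_adjoint (A :: complex mat)) = A"
  by (rule eq_matI) auto

lemma mat_adjoint_smult: "mat_adjoint (c \<cdot>\<^sub>m (A :: complex mat)) = cnj c \<cdot>\<^sub>m mat_adjoint A"
  by (rule eq_matI) auto

lemma mat_adjoint_one[simp]: "mat_adjoint (1\<^sub>m n :: complex mat) = 1\<^sub>m n"
  by (rule eq_matI) auto

lemma mat_adjoint_eq_zero_iff[simp]: "mat_adjoint (A :: complex mat) = 0\<^sub>m m n \<longleftrightarrow> A = 0\<^sub>m n m"
  by (metis mat_adjoint_adjoint index_zero_mat(2,3) eq_matI index_mat_adjoint mat_adjoint_dim(2)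
      complex_cnj_zero_iff index_zero_mat(1))

lemma index_mult_mat_sum:
  assumes "A \<in> carrier_mat n m" "B \<in> carrier_mat m k" "i < n" "j < k"
  shows "(A * B) $$ (i,j) = (\<Sum>l<m. A $$ (i,l) * B $$ (l,j))"
  using assms by (auto simp: scalar_prod_def lessThan_atLeast0 intro!: sum.cong)

lemma mat_adjoint_mult:
  assumes A: "A \<in> carrier_mat n m" and B: "B \<in> carrier_mat m k"
  shows "mat_adjoint ((A :: complex mat) * B) = mat_adjoint B * mat_adjoint A"
proof (rule eq_matI)
  fix i j assume "i < dim_row (mat_adjoint B * mat_adjoint A)" "j < dim_col (mat_adjoint B * mat_adjoint A)"
  with A B have ij: "i < k" "j < n" by simp_all
  with A B show "mat_adjoint (A * B) $$ (i,j) = (mat_adjoint B * mat_adjoint A) $$ (i,j)"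
    by (simp del: index_mult_mat(1) add: carrier_matD index_mult_mat_sum[OF A B] index_mult_mat_sum[OF
          mat_adjoint_carrier[OF B] mat_adjoint_carrier[OF A]] cnj_sum mult.commute)
qed (use A B in simp_all)

lemma mult_mat_assoc5:
  assumes "A \<in> carrier_mat N N" "B \<in> carrier_mat N N" "C \<in> carrier_mat N N" "D \<in> carrier_mat N N"
    "E \<in> carrier_mat N N"
  shows "A * (B * C * D) * E = (A * B) * C * (D * E)"
proof -
  have "A * B \<in> carrier_mat N N" "B * C \<in> carrier_mat N N" "B * C * D \<in> carrier_mat N N"
    "C * D \<in> carrier_mat N N" "D * E \<in> carrier_mat N N"
    using assms by (meson mult_carrier_mat)+
  with assms show ?thesis by (simp add: assoc_mult_mat[of _ N N _ N _ N])
qed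

lemma smult_smult_mat: "a \<cdot>\<^sub>m (b \<cdot>\<^sub>m (A :: complex mat)) = (a * b) \<cdot>\<^sub>m A"
  by (rule eq_matI) simp_all

lemma one_smult_mat: "(1 :: complex) \<cdot>\<^sub>m A = A"
  by (rule eq_matI) simp_all

lemma smult_mult_smult:
  assumes "A \<in> carrier_mat n m" "B \<in> carrier_mat m k"
  shows "(a \<cdot>\<^sub>m A) * (b \<cdot>\<^sub>m B) = (a * b) \<cdot>\<^sub>m (A * (B :: complex mat))"
  using assms by (intro eq_matI) auto

lemma sandwich_smult:
  assumes A: "A \<in> carrier_mat n n" and X: "X \<in> carrier_mat n n"
  shows "(c \<cdot>\<^sub>m A) * X * mat_adjoint (c \<cdot>\<^sub>m A) = (c * cnj c) \<cdot>\<^sub>m (A * X * mat_adjoint (A :: complex mat))"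
proof -
  have "(c \<cdot>\<^sub>m A) * X = c \<cdot>\<^sub>m (A * X)" by (rule mult_smult_assoc_mat[OF A X])
  moreover have "A * X \<in> carrier_mat n n" using A X by simp
  ultimately show ?thesis
    unfolding mat_adjoint_smult using A by (simp add: smult_mult_smult[of _ n n _ n] mult.commute)
qed

lemma msum_carrier[simp]:
  "msum n f S \<in> carrier_mat n n" "dim_row (msum n f S) = n" "dim_col (msum n f S) = n"
  by (auto simp: msum_def)

lemma index_msum[simp]: "i < n \<Longrightarrow> j < n \<Longrightarrow> msum n f S $$ (i,j) = (\<Sum>x\<in>S. f x $$ (i,j))"
  by (simp add: msum_def)

lemma msum_mult_left:
  assumes A: "A \<in> carrier_mat n n" and f: "\<And>x. x \<in> S \<Longrightarrow> f x \<in> carrier_mat n n"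
  shows "A * msum n f S = msum n (\<lambda>x. A * f x) S"
proof (rule eq_matI)
  fix i j assume "i < dim_row (msum n (\<lambda>x. A * f x) S)" "j < dim_col (msum n (\<lambda>x. A * f x) S)"
  hence ij: "i < n" "j < n" by auto
  have "(A * msum n f S) $$ (i,j) = (\<Sum>x\<in>S. \<Sum>l<n. A $$ (i,l) * f x $$ (l,j))"
    using ij by (simp add: index_mult_mat_sum[OF A msum_carrier(1)] sum_distrib_left sum.swap[of _ S])
  also have "\<dots> = msum n (\<lambda>x. A * f x) S $$ (i,j)"
    using ij by (simp add: index_mult_mat_sum[OF A f])
  finally show "(A * msum n f S) $$ (i,j) = msum n (\<lambda>x. A * f x) S $$ (i,j)" .
qed (use A in auto)

lemma msum_mult_right:
  assumes A: "A \<in> carrier_mat n n" and f: "\<And>x. x \<in> S \<Longrightarrow> f x \<in> carrier_mat n n"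
  shows "msum n f S * A = msum n (\<lambda>x. f x * A) S"
proof (rule eq_matI)
  fix i j assume "i < dim_row (msum n (\<lambda>x. f x * A) S)" "j < dim_col (msum n (\<lambda>x. f x * A) S)"
  hence ij: "i < n" "j < n" by auto
  have "(msum n f S * A) $$ (i,j) = (\<Sum>x\<in>S. \<Sum>l<n. f x $$ (i,l) * A $$ (l,j))"
    using ij by (simp add: index_mult_mat_sum[OF msum_carrier(1) A] sum_distrib_right sum.swap[of _ S])
  also have "\<dots> = msum n (\<lambda>x. f x * A) S $$ (i,j)"
    using ij by (simp add: index_mult_mat_sum[OF f A])
  finally show "(msum n f S * A) $$ (i,j) = msum n (\<lambda>x. f x * A) S $$ (i,j)" .
qed (use A in auto)

lemma msum_cong: "(\<And>x. x \<in> S \<Longrightarrow> f x = g x) \<Longrightarrow> msum n f S = msum n g S"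
  unfolding msum_def by (simp cong: sum.cong)

lemma smult_msum:
  assumes "\<And>x. x \<in> S \<Longrightarrow> f x \<in> carrier_mat n n"
  shows "a \<cdot>\<^sub>m msum n f S = msum n (\<lambda>x. a \<cdot>\<^sub>m f x) S"
proof -
  have "(a \<cdot>\<^sub>m f x) $$ (i,j) = a * f x $$ (i,j)" if "x \<in> S" "i < n" "j < n" for x i j
    using assms[OF that(1)] that(2,3) by auto
  thus ?thesis by (intro eq_matI) (auto simp: sum_distrib_left)
qed

lemma msum_Sigma:
  "finite S \<Longrightarrow> (\<And>x. x \<in> S \<Longrightarrow> finite (T x)) \<Longrightarrow>
    msum n (\<lambda>x. msum n (g x) (T x)) S = msum n (\<lambda>p. g (fst p) (snd p)) (Sigma S T)"
  by (rule eq_matI) (simp_all add: sum.Sigma case_prod_beta)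

lemma msum_reindex: "inj_on h A \<Longrightarrow> msum n f (h ` A) = msum n (\<lambda>x. f (h x)) A"
  by (rule eq_matI) (simp_all add: sum.reindex)

lemma mat_diff_eq_0_iff:
  assumes "A \<in> carrier_mat n m" "B \<in> carrier_mat n m"
  shows "A - B = 0\<^sub>m n m \<longleftrightarrow> A = (B :: complex mat)"
proof
  assume "A - B = 0\<^sub>m n m"
  hence "(A - B) $$ (i,j) = 0" if "i < n" "j < m" for i j using that by simp
  with assms show "A = B" by (intro eq_matI) auto
qed (use assms in auto)
section \<open>Linear spans of families of square matrices\<close>

lemma mat_1_neq_0_iff: "A \<in> carrier_mat 1 1 \<Longrightarrow> A \<noteq> 0\<^sub>m 1 1 \<longleftrightarrow> A $$ (0,0) \<noteq> 0"
  by (auto intro!: eq_matI)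

definition mat_lincomb :: "nat \<Rightarrow> ('i \<Rightarrow> complex) \<Rightarrow> ('i \<Rightarrow> complex mat) \<Rightarrow> 'i set \<Rightarrow> complex mat" where
  "mat_lincomb n c f S = mat n n (\<lambda>ij. \<Sum>x\<in>S. c x * f x $$ ij)"

definition mat_span :: "nat \<Rightarrow> ('i \<Rightarrow> complex mat) \<Rightarrow> 'i set \<Rightarrow> complex mat set" where
  "mat_span n f S = {A. \<exists>c. A = mat_lincomb n c f S}"

lemma mat_lincomb_carrier[simp]:
  "mat_lincomb n c f S \<in> carrier_mat n n"
  "dim_row (mat_lincomb n c f S) = n" "dim_col (mat_lincomb n c f S) = n"
  by (auto simp: mat_lincomb_def)

lemma index_mat_lincomb[simp]:
  "i < n \<Longrightarrow> j < n \<Longrightarrow> mat_lincomb n c f S $$ (i,j) = (\<Sum>x\<in>S. c x * f x $$ (i,j))"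
  by (simp add: mat_lincomb_def)

lemma mat_spanI: "A = mat_lincomb n c f S \<Longrightarrow> A \<in> mat_span n f S"
  by (auto simp: mat_span_def)

lemma mat_spanE: "A \<in> mat_span n f S \<Longrightarrow> (\<And>c. A = mat_lincomb n c f S \<Longrightarrow> thesis) \<Longrightarrow> thesis"
  by (auto simp: mat_span_def)

lemma mat_span_carrier: "A \<in> mat_span n f S \<Longrightarrow> A \<in> carrier_mat n n"
  by (auto elim: mat_spanE)

lemma msum_smult_eq_mat_lincomb:
  assumes "\<And>x. x \<in> S \<Longrightarrow> f x \<in> carrier_mat n n"
  shows "msum n (\<lambda>x. c x \<cdot>\<^sub>m f x) S = mat_lincomb n c f S"
proof -
  have "(c x \<cdot>\<^sub>m f x) $$ (i,j) = c x * f x $$ (i,j)" if "x \<in> S" "i < n" "j < n" for x i j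
    using assms[OF that(1)] that(2,3) by auto
  thus ?thesis by (intro eq_matI) auto
qed

lemma mat_span_trans:
  assumes "finite S" "finite T"
    and sub: "\<And>x. x \<in> S \<Longrightarrow> f x \<in> mat_span n g T"
    and A: "A \<in> mat_span n f S"
  shows "A \<in> mat_span n g T"
proof -
  from A obtain c where Ac: "A = mat_lincomb n c f S" by (rule mat_spanE)
  from sub have "\<forall>x\<in>S. \<exists>d. f x = mat_lincomb n d g T" by (auto simp: mat_span_def)
  from bchoice[OF this] obtain D where D: "\<And>x. x \<in> S \<Longrightarrow> f x = mat_lincomb n (D x) g T" by blast
  have "A = mat_lincomb n (\<lambda>y. \<Sum>x\<in>S. c x * D x y) g T"
  proof (rule eq_matI)
    fix i j assume "i < dim_row (mat_lincomb n (\<lambda>y. \<Sum>x\<in>S. c x * D x y) g T)"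
      "j < dim_col (mat_lincomb n (\<lambda>y. \<Sum>x\<in>S. c x * D x y) g T)"
    hence ij: "i < n" "j < n" by auto
    have "A $$ (i,j) = (\<Sum>x\<in>S. c x * (\<Sum>y\<in>T. D x y * g y $$ (i,j)))"
      using ij by (auto simp: Ac D intro!: sum.cong)
    also have "\<dots> = (\<Sum>y\<in>T. (\<Sum>x\<in>S. c x * D x y) * g y $$ (i,j))"
      by (simp add: sum_distrib_left sum_distrib_right sum.swap[of _ S] mult.assoc)
    finally show "A $$ (i,j) = mat_lincomb n (\<lambda>y. \<Sum>x\<in>S. c x * D x y) g T $$ (i,j)"
      using ij by simp
  qed (simp_all add: Ac)
  thus ?thesis by (rule mat_spanI)
qed

lemma mat_span_generator:
  assumes "finite S" "x \<in> S" "f x \<in> carrier_mat n n"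
  shows "f x \<in> mat_span n f S"
proof (rule mat_spanI)
  have "(\<Sum>y\<in>S. (if y = x then 1 else 0) * f y $$ (i,j)) = (\<Sum>y\<in>S. if y = x then f y $$ (i,j) else 0)"
    for i j by (intro sum.cong) auto
  with assms show "f x = mat_lincomb n (\<lambda>y. if y = x then 1 else 0) f S"
    by (intro eq_matI) auto
qed

lemma mat_span_insert:
  assumes "finite T" "g t \<in> carrier_mat n n" "\<And>y. y \<in> T \<Longrightarrow> g y \<in> carrier_mat n n"
    and "A \<in> mat_span n g T"
  shows "A \<in> mat_span n g (insert t T)"
  by (rule mat_span_trans[OF assms(1) _ _ assms(4)]) (auto intro: mat_span_generator simp: assms)

lemma mat_span_smult:
  assumes "A \<in> mat_span n f S"
  shows "a \<cdot>\<^sub>m A \<in> mat_span n f S"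
proof -
  from assms obtain c where "A = mat_lincomb n c f S" by (rule mat_spanE)
  hence "a \<cdot>\<^sub>m A = mat_lincomb n (\<lambda>x. a * c x) f S"
    by (intro eq_matI) (simp_all add: sum_distrib_left mult.assoc)
  thus ?thesis by (rule mat_spanI)
qed

lemma mat_span_add:
  assumes "A \<in> mat_span n g T" "B \<in> mat_span n g T"
  shows "A + B \<in> mat_span n g T"
proof -
  obtain c d where "A = mat_lincomb n c g T" "B = mat_lincomb n d g T"
    using assms by (auto elim!: mat_spanE)
  hence "A + B = mat_lincomb n (\<lambda>y. c y + d y) g T"
    by (intro eq_matI) (simp_all add: sum.distrib distrib_right)
  thus ?thesis by (rule mat_spanI)
qed

lemma mat_span_diff:
  assumes "A \<in> mat_span n g T" "B \<in> mat_span n g T"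
  shows "A - B \<in> mat_span n g T"
proof -
  obtain c d where "A = mat_lincomb n c g T" "B = mat_lincomb n d g T"
    using assms by (auto elim!: mat_spanE)
  hence "A - B = mat_lincomb n (\<lambda>y. c y - d y) g T"
    by (intro eq_matI) (simp_all add: sum_subtractf left_diff_distrib)
  thus ?thesis by (rule mat_spanI)
qed

lemma zero_in_mat_span: "0\<^sub>m n n \<in> mat_span n g T"
  by (rule mat_spanI[of _ _ "\<lambda>_. 0"], rule eq_matI) simp_all

lemma mat_span_of_zeros:
  assumes "\<And>x. x \<in> S \<Longrightarrow> f x = 0\<^sub>m n n" "A \<in> mat_span n f S"
  shows "A = 0\<^sub>m n n"
proof -
  from assms(2) obtain c where "A = mat_lincomb n c f S" by (rule mat_spanE)
  with assms(1) show ?thesis by (intro eq_matI) simp_all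
qed

lemma mat_span_nonzero:
  assumes "A \<in> mat_span n f S" "A \<noteq> 0\<^sub>m n n"
  shows "\<exists>x\<in>S. f x \<noteq> 0\<^sub>m n n"
proof (rule ccontr)
  assume "\<not> ?thesis"
  hence "\<And>x. x \<in> S \<Longrightarrow> f x = 0\<^sub>m n n" by blast
  from mat_span_of_zeros[OF this assms(1)] assms(2) show False by simp
qed

lemma mat_span_reindex:
  assumes "inj_on h A"
  shows "mat_span n f (h ` A) = mat_span n (\<lambda>x. f (h x)) A"
proof (intro equalityI subsetI)
  fix B assume "B \<in> mat_span n f (h ` A)"
  then obtain c where "B = mat_lincomb n c f (h ` A)" by (rule mat_spanE)
  also have "\<dots> = mat_lincomb n (\<lambda>x. c (h x)) (\<lambda>x. f (h x)) A"
    using assms by (simp add: mat_lincomb_def sum.reindex)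
  finally show "B \<in> mat_span n (\<lambda>x. f (h x)) A" by (rule mat_spanI)
next
  fix B assume "B \<in> mat_span n (\<lambda>x. f (h x)) A"
  then obtain c where "B = mat_lincomb n c (\<lambda>x. f (h x)) A" by (rule mat_spanE)
  also have "\<dots> = mat_lincomb n (\<lambda>y. c (the_inv_into A h y)) f (h ` A)"
    using assms unfolding mat_lincomb_def
    by (intro cong_mat refl) (simp add: sum.reindex the_inv_into_f_f cong: sum.cong)
  finally show "B \<in> mat_span n f (h ` A)" by (rule mat_spanI)
qed

lemma mat_span_adjoint:
  assumes f: "\<And>x. x \<in> S \<Longrightarrow> f x \<in> carrier_mat n n" and A: "A \<in> mat_span n f S"
  shows "mat_adjoint A \<in> mat_span n (\<lambda>x. mat_adjoint (f x)) S"
proof -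
  from A obtain c where Ac: "A = mat_lincomb n c f S" by (rule mat_spanE)
  have "mat_adjoint (f x) $$ (i,j) = cnj (f x $$ (j,i))" if "x \<in> S" "i < n" "j < n" for x i j
    using f[OF that(1)] that(2,3) by auto
  hence "mat_adjoint A = mat_lincomb n (\<lambda>x. cnj (c x)) (\<lambda>x. mat_adjoint (f x)) S"
    by (intro eq_matI) (auto simp: Ac cnj_sum)
  thus ?thesis by (rule mat_spanI)
qed

lemma mat_span_mult:
  assumes cf: "\<And>x. x \<in> S \<Longrightarrow> f x \<in> carrier_mat n n" and cg: "\<And>y. y \<in> T \<Longrightarrow> g y \<in> carrier_mat n n"
    and A: "A \<in> mat_span n f S" and B: "B \<in> mat_span n g T"
  shows "A * B \<in> mat_span n (\<lambda>p. f (fst p) * g (snd p)) (S \<times> T)"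
proof -
  from A B obtain c d where Ac: "A = mat_lincomb n c f S" and Bd: "B = mat_lincomb n d g T"
    by (auto elim!: mat_spanE)
  have "A * B = mat_lincomb n (\<lambda>p. c (fst p) * d (snd p)) (\<lambda>p. f (fst p) * g (snd p)) (S \<times> T)"
  proof (rule eq_matI)
    fix i j assume "i < dim_row (mat_lincomb n (\<lambda>p. c (fst p) * d (snd p)) (\<lambda>p. f (fst p) * g (snd p)) (S \<times> T))"
      "j < dim_col (mat_lincomb n (\<lambda>p. c (fst p) * d (snd p)) (\<lambda>p. f (fst p) * g (snd p)) (S \<times> T))"
    hence ij: "i < n" "j < n" by auto
    have "(A * B) $$ (i,j) = (\<Sum>l<n. (\<Sum>x\<in>S. c x * f x $$ (i,l)) * (\<Sum>y\<in>T. d y * g y $$ (l,j)))"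
      using ij unfolding Ac Bd
      by (simp del: index_mult_mat(1) add: index_mult_mat_sum[OF mat_lincomb_carrier(1) mat_lincomb_carrier(1)])
    also have "\<dots> = (\<Sum>l<n. \<Sum>x\<in>S. \<Sum>y\<in>T. c x * d y * (f x $$ (i,l) * g y $$ (l,j)))"
      by (simp add: sum_product mult_ac)
    also have "\<dots> = (\<Sum>x\<in>S. \<Sum>y\<in>T. \<Sum>l<n. c x * d y * (f x $$ (i,l) * g y $$ (l,j)))"
      by (subst sum.swap, rule sum.cong[OF refl], rule sum.swap)
    also have "\<dots> = (\<Sum>x\<in>S. \<Sum>y\<in>T. c x * d y * (\<Sum>l<n. f x $$ (i,l) * g y $$ (l,j)))"
      by (simp add: sum_distrib_left)
    also have "\<dots> = (\<Sum>x\<in>S. \<Sum>y\<in>T. c x * d y * (f x * g y) $$ (i,j))"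
      by (intro sum.cong refl) (simp add: index_mult_mat_sum[OF cf cg ij])
    also have "\<dots> = (\<Sum>p\<in>S \<times> T. c (fst p) * d (snd p) * (f (fst p) * g (snd p)) $$ (i,j))"
      by (simp add: sum.cartesian_product case_prod_beta)
    finally show "(A * B) $$ (i,j) = mat_lincomb n (\<lambda>p. c (fst p) * d (snd p)) (\<lambda>p. f (fst p) * g (snd p)) (S \<times> T) $$ (i,j)"
      using ij by simp
  qed (simp_all add: Ac Bd)
  thus ?thesis by (rule mat_spanI)
qed

section \<open>The Hilbert-Schmidt inner product\<close>

definition hs_inner :: "nat \<Rightarrow> complex mat \<Rightarrow> complex mat \<Rightarrow> complex" where
  "hs_inner n A B = (\<Sum>i<n. \<Sum>j<n. cnj (A $$ (i,j)) * B $$ (i,j))"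

lemma hs_inner_commute: "hs_inner n A B = cnj (hs_inner n B A)"
  unfolding hs_inner_def cnj_sum by (simp add: mult.commute)

lemma hs_inner_self: "hs_inner n R R = complex_of_real (\<Sum>i<n. \<Sum>j<n. (cmod (R $$ (i,j)))\<^sup>2)"
  unfolding hs_inner_def of_real_sum complex_norm_square by (simp add: mult.commute)

lemma hs_inner_self_eq_0_iff:
  assumes "R \<in> carrier_mat n n"
  shows "hs_inner n R R = 0 \<longleftrightarrow> R = 0\<^sub>m n n"
proof
  assume "hs_inner n R R = 0"
  hence "(\<Sum>i<n. \<Sum>j<n. (cmod (R $$ (i,j)))\<^sup>2) = 0" unfolding hs_inner_self of_real_eq_0_iff .
  hence "\<forall>i<n. \<forall>j<n. (cmod (R $$ (i,j)))\<^sup>2 = 0"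
    by (simp add: sum_nonneg_eq_0_iff sum_nonneg)
  with assms show "R = 0\<^sub>m n n" by (intro eq_matI) auto
qed (simp add: hs_inner_def)

lemma hs_inner_add_left:
  "A \<in> carrier_mat n n \<Longrightarrow> B \<in> carrier_mat n n \<Longrightarrow> hs_inner n (A + B) C = hs_inner n A C + hs_inner n B C"
  unfolding hs_inner_def sum.distrib[symmetric] by (intro sum.cong) (auto simp: algebra_simps)

lemma hs_inner_diff_right:
  "B \<in> carrier_mat n n \<Longrightarrow> C \<in> carrier_mat n n \<Longrightarrow> hs_inner n A (B - C) = hs_inner n A B - hs_inner n A C"
  unfolding hs_inner_def sum_subtractf[symmetric] by (intro sum.cong) (auto simp: algebra_simps)

lemma hs_inner_smult_right: "B \<in> carrier_mat n n \<Longrightarrow> hs_inner n A (a \<cdot>\<^sub>m B) = a * hs_inner n A B"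
  unfolding hs_inner_def sum_distrib_left by (intro sum.cong) (auto simp: algebra_simps)

lemma hs_inner_mat_lincomb_right:
  "hs_inner n A (mat_lincomb n c g T) = (\<Sum>y\<in>T. c y * hs_inner n A (g y))"
proof -
  have "hs_inner n A (mat_lincomb n c g T) = (\<Sum>i<n. \<Sum>j<n. \<Sum>y\<in>T. c y * (cnj (A $$ (i,j)) * g y $$ (i,j)))"
    unfolding hs_inner_def by (simp add: sum_distrib_left mult_ac)
  also have "\<dots> = (\<Sum>y\<in>T. \<Sum>i<n. \<Sum>j<n. c y * (cnj (A $$ (i,j)) * g y $$ (i,j)))"
    by (subst sum.swap, rule sum.cong[OF refl], rule sum.swap)
  finally show ?thesis by (simp add: hs_inner_def sum_distrib_left)
qed

lemma mtrace_mult_adjoint: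
  assumes "E \<in> carrier_mat n n"
  shows "mtrace (E * mat_adjoint E) = hs_inner n E E"
  using assms by (auto simp: mtrace_def hs_inner_def mult.commute
      index_mult_mat_sum[OF assms mat_adjoint_carrier[OF assms]] simp del: index_mult_mat(1) intro!: sum.cong)

lemma hs_inner_orthogonal_mat_span:
  assumes "\<And>y. y \<in> T \<Longrightarrow> hs_inner n (g y) R = 0" and "P \<in> mat_span n g T"
  shows "hs_inner n P R = 0"
proof -
  from assms(2) obtain c where "P = mat_lincomb n c g T" by (rule mat_spanE)
  hence "hs_inner n R P = (\<Sum>y\<in>T. c y * hs_inner n R (g y))" by (simp add: hs_inner_mat_lincomb_right)
  also have "\<dots> = 0" using assms(1) by (simp add: hs_inner_commute[of n R])
  finally show ?thesis by (subst hs_inner_commute) simp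
qed

lemma hs_inner_orthogonal_correction:
  assumes K: "K \<in> carrier_mat n n" and P1: "P1 \<in> carrier_mat n n" and r: "r \<in> carrier_mat n n"
    and rr: "hs_inner n r r \<noteq> 0"
    and o1: "\<And>y. y \<in> T \<Longrightarrow> hs_inner n (g y) (K - P1) = 0" and o2: "\<And>y. y \<in> T \<Longrightarrow> hs_inner n (g y) r = 0"
  defines "P \<equiv> P1 + (hs_inner n r (K - P1) / hs_inner n r r) \<cdot>\<^sub>m r"
  shows "\<forall>y\<in>T. hs_inner n (g y) (K - P) = 0" and "hs_inner n r (K - P) = 0"
proof -
  let ?a = "hs_inner n r (K - P1) / hs_inner n r r"
  have KP: "K - P = (K - P1) - ?a \<cdot>\<^sub>m r" unfolding P_def using K P1 r by (intro eq_matI) auto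
  have cK1: "K - P1 \<in> carrier_mat n n" by (rule minus_carrier_mat[OF P1])
  show "\<forall>y\<in>T. hs_inner n (g y) (K - P) = 0"
    unfolding KP by (simp add: hs_inner_diff_right[OF cK1] r hs_inner_smult_right o1 o2)
  have "hs_inner n r (K - P) = hs_inner n r (K - P1) - ?a * hs_inner n r r"
    unfolding KP by (simp add: hs_inner_diff_right[OF cK1] r hs_inner_smult_right)
  also have "\<dots> = 0" using rr by simp
  finally show "hs_inner n r (K - P) = 0" .
qed

lemma mat_span_projection:
  assumes "finite T" "\<And>y. y \<in> T \<Longrightarrow> g y \<in> carrier_mat n n" "K \<in> carrier_mat n n"
  shows "\<exists>P\<in>mat_span n g T. \<forall>y\<in>T. hs_inner n (g y) (K - P) = 0"
  using assms
proof (induct T arbitrary: K rule: finite_induct)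
  case empty
  show ?case using zero_in_mat_span by blast
next
  case (insert t T)
  have cg: "\<And>y. y \<in> T \<Longrightarrow> g y \<in> carrier_mat n n" and ct: "g t \<in> carrier_mat n n"
    using insert(4) by simp_all
  from insert(3)[OF cg insert(5)] obtain P1 where P1: "P1 \<in> mat_span n g T"
    and o1: "\<And>y. y \<in> T \<Longrightarrow> hs_inner n (g y) (K - P1) = 0" by blast
  from insert(3)[OF cg ct] obtain P2 where P2: "P2 \<in> mat_span n g T"
    and o2: "\<And>y. y \<in> T \<Longrightarrow> hs_inner n (g y) (g t - P2) = 0" by blast
  have cP1: "P1 \<in> carrier_mat n n" and cP2: "P2 \<in> carrier_mat n n"
    using P1 P2 by (simp_all add: mat_span_carrier)
  have ext: "\<And>A. A \<in> mat_span n g T \<Longrightarrow> A \<in> mat_span n g (insert t T)"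
    using mat_span_insert[of T g t n] insert(1) ct cg by blast
  define r where "r = g t - P2"
  have cr: "r \<in> carrier_mat n n" unfolding r_def by (rule minus_carrier_mat[OF cP2])
  show ?case
  proof (cases "r = 0\<^sub>m n n")
    case True
    hence "g t = P2" unfolding r_def using ct cP2 by (simp add: mat_diff_eq_0_iff)
    hence "hs_inner n (g t) (K - P1) = 0" using hs_inner_orthogonal_mat_span[OF o1 P2] by simp
    with o1 ext[OF P1] show ?thesis by auto
  next
    case False
    hence rr: "hs_inner n r r \<noteq> 0" using hs_inner_self_eq_0_iff[OF cr] by simp
    define P where "P = P1 + (hs_inner n r (K - P1) / hs_inner n r r) \<cdot>\<^sub>m r"
    note orth = hs_inner_orthogonal_correction[where T = T and g = g,
        OF insert(5) cP1 cr rr o1 o2[folded r_def], folded P_def]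
    have "r \<in> mat_span n g (insert t T)"
      unfolding r_def by (intro mat_span_diff mat_span_generator ext[OF P2]) (simp_all add: insert(1) ct)
    hence P: "P \<in> mat_span n g (insert t T)"
      unfolding P_def by (intro mat_span_add ext[OF P1] mat_span_smult)
    have "g t = r + P2" unfolding r_def using ct cP2 by (intro eq_matI) auto
    hence "hs_inner n (g t) (K - P) = hs_inner n r (K - P) + hs_inner n P2 (K - P)"
      by (simp add: hs_inner_add_left[OF cr cP2])
    also have "\<dots> = 0" using orth hs_inner_orthogonal_mat_span[OF _ P2, of "K - P"] by simp
    finally show ?thesis using orth(1) P by auto
  qed
qed

section \<open>Products along words\<close>

text \<open>A constant F covers the words of a single Kraus family; a varying F covers the products
  arising from a composition of different maps.\<close>

fun pos_word_prod :: "nat \<Rightarrow> (nat \<Rightarrow> 'i \<Rightarrow> complex mat) \<Rightarrow> 'i list \<Rightarrow> complex mat" where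
  "pos_word_prod n F [] = 1\<^sub>m n"
| "pos_word_prod n F (x # xs) = F 0 x * pos_word_prod n (\<lambda>j. F (Suc j)) xs"

definition pos_words :: "(nat \<Rightarrow> 'i set) \<Rightarrow> nat \<Rightarrow> 'i list set" where
  "pos_words I m = {w. length w = m \<and> (\<forall>k<m. w ! k \<in> I k)}"

lemma pos_words_0[simp]: "pos_words I 0 = {[]}"
  by (auto simp: pos_words_def)

lemma Cons_in_pos_words_iff:
  "x # xs \<in> pos_words I (Suc m) \<longleftrightarrow> x \<in> I 0 \<and> xs \<in> pos_words (\<lambda>j. I (Suc j)) m"
  by (auto simp: pos_words_def nth_Cons split: nat.splits)

lemma pos_words_Suc: "pos_words I (Suc m) = (\<lambda>p. fst p # snd p) ` (I 0 \<times> pos_words (\<lambda>j. I (Suc j)) m)"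
proof (intro equalityI subsetI)
  fix w assume w: "w \<in> pos_words I (Suc m)"
  then obtain x xs where wx: "w = x # xs" by (cases w) (auto simp: pos_words_def)
  with w have "x \<in> I 0" "xs \<in> pos_words (\<lambda>j. I (Suc j)) m" by (simp_all add: Cons_in_pos_words_iff)
  thus "w \<in> (\<lambda>p. fst p # snd p) ` (I 0 \<times> pos_words (\<lambda>j. I (Suc j)) m)"
    by (intro image_eqI[of _ _ "(x, xs)"]) (simp_all add: wx)
qed (auto simp: Cons_in_pos_words_iff)

lemma inj_on_Cons_pair: "inj_on (\<lambda>p. fst p # snd p) A"
  by (auto simp: inj_on_def prod_eq_iff)

lemma length_pos_words: "w \<in> pos_words I m \<Longrightarrow> length w = m"
  by (simp add: pos_words_def)

lemma finite_pos_words: "(\<And>j. j < m \<Longrightarrow> finite (I j)) \<Longrightarrow> finite (pos_words I m)"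
  by (induct m arbitrary: I) (simp_all add: pos_words_Suc)

lemma pos_words_const: "pos_words (\<lambda>_. S) m = {w. length w = m \<and> set w \<subseteq> S}"
  unfolding pos_words_def by (auto simp: subset_code(1) all_set_conv_all_nth)

lemma rev_in_pos_words_iff:
  "rev w \<in> pos_words I m \<longleftrightarrow> w \<in> pos_words (\<lambda>j. I (m - 1 - j)) m"
proof -
  have "(\<forall>k<m. w ! (m - Suc k) \<in> I k) \<longleftrightarrow> (\<forall>k<m. w ! k \<in> I (m - 1 - k))"
  proof safe
    fix k assume "\<forall>k<m. w ! (m - Suc k) \<in> I k" "k < m"
    moreover from \<open>k < m\<close> have "m - 1 - k < m" "m - Suc (m - 1 - k) = k" by simp_all
    ultimately show "w ! k \<in> I (m - 1 - k)" by metis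
  next
    fix k assume "\<forall>k<m. w ! k \<in> I (m - 1 - k)" "k < m"
    moreover from \<open>k < m\<close> have "m - Suc k < m" "m - 1 - (m - Suc k) = k" by simp_all
    ultimately show "w ! (m - Suc k) \<in> I k" by metis
  qed
  thus ?thesis by (auto simp: pos_words_def rev_nth)
qed

lemma pos_word_prod_carrier:
  "(\<And>j. j < length w \<Longrightarrow> F j (w ! j) \<in> carrier_mat n n) \<Longrightarrow> pos_word_prod n F w \<in> carrier_mat n n"
proof (induct w arbitrary: F)
  case (Cons x xs)
  have "F 0 x \<in> carrier_mat n n" using Cons(2)[of 0] by simp
  moreover have "pos_word_prod n (\<lambda>j. F (Suc j)) xs \<in> carrier_mat n n"
    using Cons(2)[of "Suc _"] by (intro Cons(1)) simp
  ultimately show ?case by simp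
qed simp

lemma pos_word_prod_carrier_pos_words:
  "(\<And>j x. j < m \<Longrightarrow> x \<in> I j \<Longrightarrow> F j x \<in> carrier_mat n n) \<Longrightarrow> w \<in> pos_words I m \<Longrightarrow>
    pos_word_prod n F w \<in> carrier_mat n n"
  by (rule pos_word_prod_carrier) (auto simp: pos_words_def)

lemma pos_word_prod_cong:
  "(\<And>j. j < length w \<Longrightarrow> F j (w ! j) = G j (w ! j)) \<Longrightarrow> pos_word_prod n F w = pos_word_prod n G w"
proof (induct w arbitrary: F G)
  case (Cons x xs)
  have "F 0 x = G 0 x" using Cons(2)[of 0] by simp
  moreover have "pos_word_prod n (\<lambda>j. F (Suc j)) xs = pos_word_prod n (\<lambda>j. G (Suc j)) xs"
    using Cons(2)[of "Suc _"] by (intro Cons(1)) simp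
  ultimately show ?case by simp
qed simp

lemma pos_word_prod_snoc:
  assumes "\<And>j. j < length w \<Longrightarrow> F j (w ! j) \<in> carrier_mat n n" "F (length w) x \<in> carrier_mat n n"
  shows "pos_word_prod n F (w @ [x]) = pos_word_prod n F w * F (length w) x"
  using assms
proof (induct w arbitrary: F)
  case (Cons y ys)
  have c: "\<And>j. j < length ys \<Longrightarrow> F (Suc j) (ys ! j) \<in> carrier_mat n n"
    using Cons(2)[of "Suc _"] by simp
  have cx: "F (Suc (length ys)) x \<in> carrier_mat n n" using Cons(3) by simp
  have "pos_word_prod n (\<lambda>j. F (Suc j)) (ys @ [x])
      = pos_word_prod n (\<lambda>j. F (Suc j)) ys * F (Suc (length ys)) x"
    by (rule Cons(1)) (use c cx in auto)
  moreover have "F 0 y \<in> carrier_mat n n" using Cons(2)[of 0] by simp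
  moreover have "pos_word_prod n (\<lambda>j. F (Suc j)) ys \<in> carrier_mat n n"
    by (rule pos_word_prod_carrier) (rule c)
  ultimately show ?case using cx by (simp add: assoc_mult_mat[of _ n n _ n _ n])
qed simp

lemma pos_word_prod_adjoint:
  assumes "\<And>j. j < length w \<Longrightarrow> F j (w ! j) \<in> carrier_mat n n"
  shows "mat_adjoint (pos_word_prod n F w)
    = pos_word_prod n (\<lambda>j x. mat_adjoint (F (length w - 1 - j) x)) (rev w)"
  using assms
proof (induct w arbitrary: F)
  case (Cons x xs)
  let ?G = "\<lambda>j y. mat_adjoint (F (length (x # xs) - 1 - j) y)"
  have c0: "F 0 x \<in> carrier_mat n n" and cxs: "\<And>j. j < length xs \<Longrightarrow> F (Suc j) (xs ! j) \<in> carrier_mat n n"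
    using Cons(2)[of 0] Cons(2)[of "Suc _"] by simp_all
  have "mat_adjoint (pos_word_prod n (\<lambda>j. F (Suc j)) xs)
      = pos_word_prod n (\<lambda>j y. mat_adjoint (F (Suc (length xs - 1 - j)) y)) (rev xs)"
    by (rule Cons(1)) (rule cxs)
  also have "\<dots> = pos_word_prod n ?G (rev xs)"
    by (rule pos_word_prod_cong) (simp add: Suc_diff_Suc)
  finally have IH: "mat_adjoint (pos_word_prod n (\<lambda>j. F (Suc j)) xs) = pos_word_prod n ?G (rev xs)" .
  have "?G j (rev xs ! j) \<in> carrier_mat n n" if j: "j < length (rev xs)" for j
  proof -
    have "F (Suc (length xs - Suc j)) (xs ! (length xs - Suc j)) \<in> carrier_mat n n"
      by (rule cxs) (use j in simp)
    moreover have "Suc (length xs - Suc j) = length (x # xs) - 1 - j" using j by simp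
    ultimately show ?thesis using j by (simp add: rev_nth)
  qed
  moreover have "?G (length (rev xs)) x = mat_adjoint (F 0 x)" by simp
  ultimately have "pos_word_prod n ?G (rev xs @ [x]) = pos_word_prod n ?G (rev xs) * ?G (length (rev xs)) x"
    using c0 by (intro pos_word_prod_snoc) simp_all
  moreover have "pos_word_prod n (\<lambda>j. F (Suc j)) xs \<in> carrier_mat n n"
    by (rule pos_word_prod_carrier) (rule cxs)
  ultimately show ?case using IH by (simp add: mat_adjoint_mult[OF c0])
qed simp

lemma pos_word_prod_const_carrier:
  "set w \<subseteq> S \<Longrightarrow> (\<And>x. x \<in> S \<Longrightarrow> f x \<in> carrier_mat n n) \<Longrightarrow> pos_word_prod n (\<lambda>_. f) w \<in> carrier_mat n n"
  by (rule pos_word_prod_carrier) (simp add: subset_code(1) all_set_conv_all_nth)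

lemma pos_word_prod_append:
  assumes "set u \<subseteq> S" "set v \<subseteq> S" "\<And>x. x \<in> S \<Longrightarrow> f x \<in> carrier_mat n n"
  shows "pos_word_prod n (\<lambda>_. f) (u @ v) = pos_word_prod n (\<lambda>_. f) u * pos_word_prod n (\<lambda>_. f) v"
proof -
  have cv: "pos_word_prod n (\<lambda>_. f) v \<in> carrier_mat n n"
    using assms(2,3) by (rule pos_word_prod_const_carrier)
  from assms(1) show ?thesis
  proof (induct u)
    case (Cons x u)
    have "f x \<in> carrier_mat n n" "pos_word_prod n (\<lambda>_. f) u \<in> carrier_mat n n"
      using Cons(2) assms(3) by (auto intro!: pos_word_prod_const_carrier)
    with Cons cv show ?case by (simp add: assoc_mult_mat[of _ n n _ n _ n])
  qed (use cv in simp)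
qed

lemma pos_word_prod_mat_span:
  assumes "\<And>j x. j < m \<Longrightarrow> x \<in> I j \<Longrightarrow> F j x \<in> mat_span n (G j) (J j)"
    and "\<And>j. j < m \<Longrightarrow> finite (J j)"
    and "\<And>j y. j < m \<Longrightarrow> y \<in> J j \<Longrightarrow> G j y \<in> carrier_mat n n"
    and "w \<in> pos_words I m"
  shows "pos_word_prod n F w \<in> mat_span n (pos_word_prod n G) (pos_words J m)"
  using assms
proof (induct m arbitrary: F G I J w)
  case 0
  thus ?case using mat_span_generator[of "{[]}" "[]" "pos_word_prod n G" n] by simp
next
  case (Suc m)
  from Suc(5) obtain x xs where w: "w = x # xs" by (cases w) (auto simp: pos_words_def)
  from Suc(5)[unfolded w Cons_in_pos_words_iff]
  have x: "x \<in> I 0" and xs: "xs \<in> pos_words (\<lambda>j. I (Suc j)) m" by auto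
  have "pos_word_prod n (\<lambda>j. F (Suc j)) xs
      \<in> mat_span n (pos_word_prod n (\<lambda>j. G (Suc j))) (pos_words (\<lambda>j. J (Suc j)) m)"
    by (rule Suc(1)[OF _ _ _ xs]) (simp_all add: Suc(2-4))
  moreover have "F 0 x \<in> mat_span n (G 0) (J 0)" using Suc(2)[of 0 x] x by simp
  moreover have "pos_word_prod n (\<lambda>j. G (Suc j)) v \<in> carrier_mat n n"
    if "v \<in> pos_words (\<lambda>j. J (Suc j)) m" for v
    by (rule pos_word_prod_carrier_pos_words[OF _ that]) (simp add: Suc(4))
  ultimately have "F 0 x * pos_word_prod n (\<lambda>j. F (Suc j)) xs \<in> mat_span n
      (\<lambda>p. G 0 (fst p) * pos_word_prod n (\<lambda>j. G (Suc j)) (snd p)) (J 0 \<times> pos_words (\<lambda>j. J (Suc j)) m)"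
    by (intro mat_span_mult) (simp_all add: Suc(4))
  thus ?case unfolding w pos_words_Suc mat_span_reindex[OF inj_on_Cons_pair] by simp
qed

lemma pos_word_prod_1_neq_0:
  "(\<And>j. j < length w \<Longrightarrow> F j (w ! j) \<in> carrier_mat 1 1 \<and> F j (w ! j) \<noteq> 0\<^sub>m 1 1) \<Longrightarrow>
    pos_word_prod 1 F w \<noteq> 0\<^sub>m 1 1"
proof (induct w arbitrary: F)
  case Nil
  show ?case
  proof
    assume "pos_word_prod 1 F [] = 0\<^sub>m 1 1"
    hence "(1\<^sub>m 1 :: complex mat) $$ (0,0) = 0\<^sub>m 1 1 $$ (0,0)" by simp
    thus False by simp
  qed
next
  case (Cons x w)
  let ?P = "pos_word_prod 1 (\<lambda>j. F (Suc j)) w"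
  have x: "F 0 x \<in> carrier_mat 1 1" "F 0 x $$ (0,0) \<noteq> 0"
    using Cons(2)[of 0] mat_1_neq_0_iff by auto
  have c: "?P \<in> carrier_mat 1 1"
    using Cons(2)[of "Suc _"] by (intro pos_word_prod_carrier) simp
  have "?P \<noteq> 0\<^sub>m 1 1" using Cons(2)[of "Suc _"] by (intro Cons(1)) simp
  hence "?P $$ (0,0) \<noteq> 0" using mat_1_neq_0_iff[OF c] by simp
  moreover have "(F 0 x * ?P) $$ (0,0) = F 0 x $$ (0,0) * ?P $$ (0,0)"
    using index_mult_mat_sum[OF x(1) c, of 0 0] by simp
  ultimately have "(F 0 x * ?P) $$ (0,0) \<noteq> 0" using x(2) by simp
  thus ?case using mat_1_neq_0_iff[OF mult_carrier_mat[OF x(1) c]] by simp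
qed

lemma word_prod_eq_pos_word_prod: "word_prod n Ks w = pos_word_prod n (\<lambda>_ i. Ks ! i) w"
  by (induct w) (simp_all add: word_prod_def)

lemma words_eq_pos_words: "words k m = pos_words (\<lambda>_. {..<k}) m"
  by (auto simp: words_def pos_words_const)

section \<open>Kraus representations\<close>

definition kraus_rep :: "nat \<Rightarrow> (complex mat \<Rightarrow> complex mat) \<Rightarrow> ('i \<Rightarrow> complex mat) \<Rightarrow> 'i set \<Rightarrow> bool" where
  "kraus_rep n L f S \<longleftrightarrow> finite S \<and> (\<forall>x\<in>S. f x \<in> carrier_mat n n) \<and>
     (\<forall>X\<in>carrier_mat n n. L X = msum n (\<lambda>x. f x * X * mat_adjoint (f x)) S)"

definition word_spanning :: "nat \<Rightarrow> ('i \<Rightarrow> complex mat) \<Rightarrow> 'i set \<Rightarrow> nat \<Rightarrow> bool" where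
  "word_spanning n f S m \<longleftrightarrow> carrier_mat n n \<subseteq> mat_span n (pos_word_prod n (\<lambda>_. f)) (pos_words (\<lambda>_. S) m)"

lemma kraus_repD:
  assumes "kraus_rep n L f S"
  shows "finite S" "x \<in> S \<Longrightarrow> f x \<in> carrier_mat n n"
    "X \<in> carrier_mat n n \<Longrightarrow> L X = msum n (\<lambda>x. f x * X * mat_adjoint (f x)) S"
  using assms by (auto simp: kraus_rep_def)

lemma kraus_rep_carrier: "kraus_rep n L f S \<Longrightarrow> X \<in> carrier_mat n n \<Longrightarrow> L X \<in> carrier_mat n n"
  by (simp add: kraus_rep_def)

lemma kraus_rep_reindex:
  "inj_on h A \<Longrightarrow> kraus_rep n L f (h ` A) \<longleftrightarrow> kraus_rep n L (\<lambda>x. f (h x)) A"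
  by (auto simp: kraus_rep_def msum_reindex finite_image_iff)

lemma sandwich_carrier[simp]:
  "A \<in> carrier_mat n n \<Longrightarrow> X \<in> carrier_mat n n \<Longrightarrow> A * X * mat_adjoint (A :: complex mat) \<in> carrier_mat n n"
  by (meson mat_adjoint_carrier mult_carrier_mat)

lemma sandwich_mult:
  assumes "A \<in> carrier_mat n n" "B \<in> carrier_mat n n" "X \<in> carrier_mat n n"
  shows "(A * B) * X * mat_adjoint (A * B) = A * (B * X * mat_adjoint B) * mat_adjoint (A :: complex mat)"
proof -
  have "B * X \<in> carrier_mat n n" "B * X * mat_adjoint B \<in> carrier_mat n n"
    "mat_adjoint B * mat_adjoint A \<in> carrier_mat n n"
    using assms by (auto intro!: mult_carrier_mat[of _ n n _ n])
  with assms show ?thesis by (simp add: mat_adjoint_mult[of _ n n _ n] assoc_mult_mat[of _ n n _ n _ n])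
qed

lemma sandwich_msum:
  assumes "A \<in> carrier_mat n n" "\<And>x. x \<in> S \<Longrightarrow> f x \<in> carrier_mat n n"
  shows "A * msum n f S * mat_adjoint A = msum n (\<lambda>x. A * f x * mat_adjoint (A :: complex mat)) S"
  using assms by (simp add: msum_mult_left msum_mult_right)

lemma kraus_rep_comp:
  assumes K: "kraus_rep n K f S" and L: "kraus_rep n L g T"
  shows "kraus_rep n (K \<circ> L) (\<lambda>p. f (fst p) * g (snd p)) (S \<times> T)"
  unfolding kraus_rep_def
proof (intro conjI ballI)
  have cf: "\<And>x. x \<in> S \<Longrightarrow> f x \<in> carrier_mat n n" and cg: "\<And>y. y \<in> T \<Longrightarrow> g y \<in> carrier_mat n n"
    using K L by (simp_all add: kraus_repD)
  show "finite (S \<times> T)" using K L by (simp add: kraus_repD)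
  show "f (fst p) * g (snd p) \<in> carrier_mat n n" if "p \<in> S \<times> T" for p
    using that by (auto intro!: mult_carrier_mat[of _ n n _ n] cf cg)
  fix X :: "complex mat" assume X: "X \<in> carrier_mat n n"
  have "(K \<circ> L) X = msum n (\<lambda>x. f x * msum n (\<lambda>y. g y * X * mat_adjoint (g y)) T * mat_adjoint (f x)) S"
    using K L X by (simp add: kraus_repD kraus_rep_carrier)
  also have "\<dots> = msum n (\<lambda>x. msum n (\<lambda>y. (f x * g y) * X * mat_adjoint (f x * g y)) T) S"
  proof (rule msum_cong)
    fix x assume x: "x \<in> S"
    have "f x * msum n (\<lambda>y. g y * X * mat_adjoint (g y)) T * mat_adjoint (f x)
        = msum n (\<lambda>y. f x * (g y * X * mat_adjoint (g y)) * mat_adjoint (f x)) T"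
      using cf[OF x] cg X by (intro sandwich_msum) simp_all
    also have "\<dots> = msum n (\<lambda>y. (f x * g y) * X * mat_adjoint (f x * g y)) T"
      using cf[OF x] cg X by (intro msum_cong) (simp add: sandwich_mult)
    finally show "f x * msum n (\<lambda>y. g y * X * mat_adjoint (g y)) T * mat_adjoint (f x) = \<dots>" .
  qed
  also have "\<dots> = msum n (\<lambda>p. f (fst p) * g (snd p) * X * mat_adjoint (f (fst p) * g (snd p))) (S \<times> T)"
    using K L by (simp add: msum_Sigma kraus_repD)
  finally show "(K \<circ> L) X = \<dots>" .
qed

lemma comp_down_Suc': "comp_down g (Suc m) = g 0 \<circ> comp_down (\<lambda>j. g (Suc j)) m"
  by (induct m arbitrary: g) (simp_all add: comp_assoc)

lemma kraus_rep_comp_down: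
  assumes "\<And>j. j < m \<Longrightarrow> kraus_rep n (g j) (F j) (I j)"
  shows "kraus_rep n (comp_down g m) (pos_word_prod n F) (pos_words I m)"
  using assms
proof (induct m arbitrary: g F I)
  case 0
  show ?case by (auto simp: kraus_rep_def intro!: eq_matI)
next
  case (Suc m)
  have "kraus_rep n (g 0 \<circ> comp_down (\<lambda>j. g (Suc j)) m)
      (\<lambda>p. F 0 (fst p) * pos_word_prod n (\<lambda>j. F (Suc j)) (snd p)) (I 0 \<times> pos_words (\<lambda>j. I (Suc j)) m)"
    by (intro kraus_rep_comp Suc) auto
  thus ?case
    unfolding comp_down_Suc' pos_words_Suc kraus_rep_reindex[OF inj_on_Cons_pair] by simp
qed

lemma comp_up_eq_comp_down: "comp_up f m = comp_down (\<lambda>j. f (m - 1 - j)) m"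
proof (induct m arbitrary: f)
  case (Suc m)
  have "comp_up f (Suc m) = f m \<circ> comp_down (\<lambda>j. f (m - 1 - j)) m" by (simp add: Suc)
  also have "\<dots> = comp_down (\<lambda>j. f (Suc m - 1 - j)) (Suc m)"
    by (subst comp_down_Suc') simp
  finally show ?case .
qed simp

lemma kraus_rep_smult:
  assumes "kraus_rep n L f S"
  shows "kraus_rep n (\<lambda>X. (c * cnj c) \<cdot>\<^sub>m L X) (\<lambda>x. c \<cdot>\<^sub>m f x) S"
  unfolding kraus_rep_def
proof (intro conjI ballI)
  show "finite S" using assms by (rule kraus_repD)
  show "c \<cdot>\<^sub>m f x \<in> carrier_mat n n" if "x \<in> S" for x
    using assms that by (simp add: kraus_repD)
  fix X :: "complex mat" assume X: "X \<in> carrier_mat n n"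
  have "(c * cnj c) \<cdot>\<^sub>m L X = msum n (\<lambda>x. (c * cnj c) \<cdot>\<^sub>m (f x * X * mat_adjoint (f x))) S"
    using assms X by (simp add: kraus_repD smult_msum)
  also have "\<dots> = msum n (\<lambda>x. (c \<cdot>\<^sub>m f x) * X * mat_adjoint (c \<cdot>\<^sub>m f x)) S"
    using X by (intro msum_cong) (simp add: sandwich_smult[OF kraus_repD(2)[OF assms] X])
  finally show "(c * cnj c) \<cdot>\<^sub>m L X = \<dots>" .
qed

lemma kraus_rep_msum:
  assumes "finite J" "\<And>j. j \<in> J \<Longrightarrow> kraus_rep n (g j) (F j) (I j)"
  shows "kraus_rep n (\<lambda>X. msum n (\<lambda>j. g j X) J) (\<lambda>p. F (fst p) (snd p)) (Sigma J I)"
  unfolding kraus_rep_def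
proof (intro conjI ballI)
  show "finite (Sigma J I)" using assms by (auto intro: kraus_repD)
  show "F (fst p) (snd p) \<in> carrier_mat n n" if "p \<in> Sigma J I" for p
    using that by (auto intro: kraus_repD(2)[OF assms(2)])
  fix X :: "complex mat" assume X: "X \<in> carrier_mat n n"
  have "msum n (\<lambda>j. g j X) J = msum n (\<lambda>j. msum n (\<lambda>x. F j x * X * mat_adjoint (F j x)) (I j)) J"
    using X by (intro msum_cong) (simp add: kraus_repD(3)[OF assms(2)])
  also have "\<dots> = msum n (\<lambda>p. F (fst p) (snd p) * X * mat_adjoint (F (fst p) (snd p))) (Sigma J I)"
    using assms(1) by (intro msum_Sigma) (simp_all add: kraus_repD(1)[OF assms(2)])
  finally show "msum n (\<lambda>j. g j X) J = \<dots>" .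
qed

lemma kraus_rep_avg_map:
  assumes M: "M \<ge> 1" and K: "\<And>j. j < M \<Longrightarrow> kraus_rep n (g j) (F j) (I j)"
  shows "kraus_rep n (avg_map n M g)
    (\<lambda>p. complex_of_real (1 / sqrt (real M)) \<cdot>\<^sub>m F (fst p) (snd p)) (Sigma {..<M} I)"
proof -
  let ?c = "complex_of_real (1 / sqrt (real M))"
  have c: "?c * cnj ?c = 1 / of_nat M"
    using M by (simp flip: of_real_mult add: real_sqrt_mult[symmetric])
  have "kraus_rep n (\<lambda>X. (?c * cnj ?c) \<cdot>\<^sub>m msum n (\<lambda>j. g j X) {..<M})
      (\<lambda>p. ?c \<cdot>\<^sub>m F (fst p) (snd p)) (Sigma {..<M} I)"
    by (rule kraus_rep_smult, rule kraus_rep_msum) (simp_all add: K)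
  thus ?thesis by (simp only: avg_map_def[abs_def] c)
qed

lemma kraus_rep_cong:
  assumes "\<And>x. x \<in> S \<Longrightarrow> f x = g x"
  shows "kraus_rep n L f S \<longleftrightarrow> kraus_rep n L g S"
proof -
  have "msum n (\<lambda>x. f x * X * mat_adjoint (f x)) S = msum n (\<lambda>x. g x * X * mat_adjoint (g x)) S" for X
    using assms by (intro msum_cong) simp
  thus ?thesis using assms unfolding kraus_rep_def by auto
qed

definition mat_unit :: "nat \<Rightarrow> nat \<Rightarrow> nat \<Rightarrow> complex mat" where
  "mat_unit n a b = mat n n (\<lambda>ij. if ij = (a,b) then 1 else 0)"

lemma mat_unit_carrier[simp]: "mat_unit n a b \<in> carrier_mat n n"
  by (simp add: mat_unit_def)

lemma index_mult_mat3:
  assumes A: "A \<in> carrier_mat n n" and B: "B \<in> carrier_mat n n" and C: "C \<in> carrier_mat n n"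
    and ij: "i < n" "j < n"
  shows "(A * B * C) $$ (i,j) = (\<Sum>l<n. \<Sum>m<n. A $$ (i,l) * B $$ (l,m) * C $$ (m,j))"
proof -
  have "(A * B * C) $$ (i,j) = (\<Sum>m<n. (\<Sum>l<n. A $$ (i,l) * B $$ (l,m)) * C $$ (m,j))"
    using ij by (simp del: index_mult_mat(1)
        add: index_mult_mat_sum[OF mult_carrier_mat[OF A B] C] index_mult_mat_sum[OF A B])
  also have "\<dots> = (\<Sum>m<n. \<Sum>l<n. A $$ (i,l) * B $$ (l,m) * C $$ (m,j))"
    by (simp add: sum_distrib_right)
  also have "\<dots> = (\<Sum>l<n. \<Sum>m<n. A $$ (i,l) * B $$ (l,m) * C $$ (m,j))"
    by (rule sum.swap)
  finally show ?thesis .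
qed

lemma sandwich_mat_unit:
  assumes A: "A \<in> carrier_mat n n" and "p < n" "q < n" "r < n" "s < n"
  shows "(A * mat_unit n q s * mat_adjoint A) $$ (p,r) = A $$ (p,q) * cnj (A $$ (r,s))"
proof -
  let ?c = "A $$ (p,q) * cnj (A $$ (r,s))"
  have "(A * mat_unit n q s * mat_adjoint A) $$ (p,r)
      = (\<Sum>l<n. \<Sum>m<n. A $$ (p,l) * mat_unit n q s $$ (l,m) * mat_adjoint A $$ (m,r))"
    by (rule index_mult_mat3) (use assms in simp_all)
  also have "\<dots> = (\<Sum>l<n. \<Sum>m<n. if l = q \<and> m = s then ?c else 0)"
    using assms by (intro sum.cong refl) (auto simp: mat_unit_def)
  also have "\<dots> = (\<Sum>l<n. if l = q then ?c else 0)"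
    using assms by (intro sum.cong refl) auto
  also have "\<dots> = ?c" using assms by simp
  finally show ?thesis .
qed

text \<open>The right-hand side depends on L only, so the weighted sum of squares on the left is
  the same for every Kraus representation of L.\<close>

lemma kraus_rep_sum_hs_inner_sq:
  assumes "kraus_rep n L f S"
  shows "(\<Sum>x\<in>S. hs_inner n W (f x) * cnj (hs_inner n W (f x)))
    = (\<Sum>p<n. \<Sum>q<n. \<Sum>r<n. \<Sum>s<n. cnj (W $$ (p,q)) * W $$ (r,s) * L (mat_unit n q s) $$ (p,r))"
proof -
  have expand: "hs_inner n W A * cnj (hs_inner n W A)
      = (\<Sum>p<n. \<Sum>q<n. \<Sum>r<n. \<Sum>s<n. cnj (W $$ (p,q)) * W $$ (r,s) * (A $$ (p,q) * cnj (A $$ (r,s))))"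
    for A
    unfolding hs_inner_def cnj_sum
    by (simp only: sum_distrib_right, simp only: sum_distrib_left) (intro sum.cong refl, simp add: mult_ac)
  have L: "L (mat_unit n q s) $$ (p,r) = (\<Sum>x\<in>S. f x $$ (p,q) * cnj (f x $$ (r,s)))"
    if "p < n" "q < n" "r < n" "s < n" for p q r s
    using that by (auto simp: kraus_repD(3)[OF assms] intro!: sum.cong sandwich_mat_unit kraus_repD(2)[OF assms])
  have "(\<Sum>x\<in>S. hs_inner n W (f x) * cnj (hs_inner n W (f x)))
    = (\<Sum>x\<in>S. \<Sum>p<n. \<Sum>q<n. \<Sum>r<n. \<Sum>s<n. cnj (W $$ (p,q)) * W $$ (r,s) * (f x $$ (p,q) * cnj (f x $$ (r,s))))"
    by (simp only: expand)
  also have "\<dots> = (\<Sum>p<n. \<Sum>q<n. \<Sum>r<n. \<Sum>s<n. \<Sum>x\<in>S. cnj (W $$ (p,q)) * W $$ (r,s) * (f x $$ (p,q) * cnj (f x $$ (r,s))))"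
    by (subst sum.swap, rule sum.cong[OF refl], subst sum.swap, rule sum.cong[OF refl],
        subst sum.swap, rule sum.cong[OF refl], rule sum.swap)
  also have "\<dots> = (\<Sum>p<n. \<Sum>q<n. \<Sum>r<n. \<Sum>s<n. cnj (W $$ (p,q)) * W $$ (r,s) * L (mat_unit n q s) $$ (p,r))"
    by (intro sum.cong refl) (simp add: L sum_distrib_left)
  finally show ?thesis .
qed

lemma sum_mult_cnj_eq_0:
  assumes "finite S" "(\<Sum>x\<in>S. z x * cnj (z x)) = 0" "x \<in> S"
  shows "z x = 0"
proof -
  have "(\<Sum>x\<in>S. z x * cnj (z x)) = complex_of_real (\<Sum>x\<in>S. (cmod (z x))\<^sup>2)"
    unfolding of_real_sum complex_norm_square by simp
  with assms(2) have "(\<Sum>x\<in>S. (cmod (z x))\<^sup>2) = 0" by (simp only: of_real_eq_0_iff)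
  with assms(1,3) have "(cmod (z x))\<^sup>2 = 0" by (subst (asm) sum_nonneg_eq_0_iff) auto
  thus ?thesis by simp
qed

text \<open>Two Kraus representations of the same map span the same space: a matrix orthogonal to
  all operators of one representation is, by the previous lemma, orthogonal to all of the other.\<close>

lemma kraus_rep_mat_span:
  assumes f: "kraus_rep n L f S" and g: "kraus_rep n L g T" and x: "x \<in> S"
  shows "f x \<in> mat_span n g T"
proof -
  have cf: "f x \<in> carrier_mat n n" using f x by (rule kraus_repD)
  have "\<exists>P\<in>mat_span n g T. \<forall>y\<in>T. hs_inner n (g y) (f x - P) = 0"
    by (rule mat_span_projection[OF kraus_repD(1)[OF g] _ cf]) (rule kraus_repD(2)[OF g])
  then obtain P where P: "P \<in> mat_span n g T" and orth: "\<And>y. y \<in> T \<Longrightarrow> hs_inner n (g y) (f x - P) = 0"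
    by blast
  define R where "R = f x - P"
  have cP: "P \<in> carrier_mat n n" using P by (rule mat_span_carrier)
  have cR: "R \<in> carrier_mat n n" unfolding R_def by (rule minus_carrier_mat[OF cP])
  have "hs_inner n R (g y) = 0" if "y \<in> T" for y
    using orth[OF that] by (subst hs_inner_commute) (simp add: R_def)
  hence "(\<Sum>y\<in>T. hs_inner n R (g y) * cnj (hs_inner n R (g y))) = 0" by simp
  hence "(\<Sum>z\<in>S. hs_inner n R (f z) * cnj (hs_inner n R (f z))) = 0"
    using kraus_rep_sum_hs_inner_sq[OF f] kraus_rep_sum_hs_inner_sq[OF g] by simp
  from sum_mult_cnj_eq_0[OF kraus_repD(1)[OF f] this x] have "hs_inner n R (f x) = 0" .
  moreover have "hs_inner n R P = 0"
    using hs_inner_orthogonal_mat_span[OF orth P] by (subst hs_inner_commute) (simp add: R_def)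
  moreover have "hs_inner n R R = hs_inner n R (f x) - hs_inner n R P"
    using hs_inner_diff_right[OF cf cP, of R] unfolding R_def[symmetric] .
  ultimately have "R = 0\<^sub>m n n" using hs_inner_self_eq_0_iff[OF cR] by simp
  hence "f x = P" unfolding R_def using cf cP by (simp add: mat_diff_eq_0_iff)
  with P show ?thesis by simp
qed
lemma word_spanning_mono:
  assumes "finite S" "finite T" "\<And>x. x \<in> S \<Longrightarrow> f x \<in> mat_span n g T"
    "\<And>y. y \<in> T \<Longrightarrow> g y \<in> carrier_mat n n" and "word_spanning n f S m"
  shows "word_spanning n g T m"
  unfolding word_spanning_def
proof
  fix A :: "complex mat" assume "A \<in> carrier_mat n n"
  with assms(5) have A: "A \<in> mat_span n (pos_word_prod n (\<lambda>_. f)) (pos_words (\<lambda>_. S) m)"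
    by (auto simp: word_spanning_def)
  show "A \<in> mat_span n (pos_word_prod n (\<lambda>_. g)) (pos_words (\<lambda>_. T) m)"
  proof (rule mat_span_trans[OF _ _ _ A])
    show "finite (pos_words (\<lambda>_. S) m)" "finite (pos_words (\<lambda>_. T) m)"
      using assms(1,2) by (simp_all add: finite_pos_words)
    show "pos_word_prod n (\<lambda>_. f) w \<in> mat_span n (pos_word_prod n (\<lambda>_. g)) (pos_words (\<lambda>_. T) m)"
      if "w \<in> pos_words (\<lambda>_. S) m" for w
      by (rule pos_word_prod_mat_span[OF _ _ _ that]) (simp_all add: assms)
  qed
qed

lemma word_spanning_adjoint:
  assumes fin: "finite S" and c: "\<And>x. x \<in> S \<Longrightarrow> f x \<in> carrier_mat n n"
    and sp: "word_spanning n f S m"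
  shows "word_spanning n (\<lambda>x. mat_adjoint (f x)) S m"
  unfolding word_spanning_def
proof
  fix A :: "complex mat" assume A: "A \<in> carrier_mat n n"
  let ?W = "pos_words (\<lambda>_. S) m"
  have finW: "finite ?W" by (simp add: fin finite_pos_words)
  have cW: "pos_word_prod n (\<lambda>_. f) w \<in> carrier_mat n n" if "w \<in> ?W" for w
    using that c by (intro pos_word_prod_const_carrier[of _ S]) (simp_all add: pos_words_const)
  from sp A have "mat_adjoint A \<in> mat_span n (pos_word_prod n (\<lambda>_. f)) ?W"
    by (auto simp: word_spanning_def)
  from mat_span_adjoint[OF cW this]
  have "A \<in> mat_span n (\<lambda>w. mat_adjoint (pos_word_prod n (\<lambda>_. f) w)) ?W" by simp
  moreover have "mat_adjoint (pos_word_prod n (\<lambda>_. f) w) \<in> mat_span n (pos_word_prod n (\<lambda>_ x. mat_adjoint (f x))) ?W"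
    if w: "w \<in> ?W" for w
  proof -
    have sw: "set w \<subseteq> S" and rw: "rev w \<in> ?W" using w by (simp_all add: pos_words_const)
    have "mat_adjoint (pos_word_prod n (\<lambda>_. f) w) = pos_word_prod n (\<lambda>_ x. mat_adjoint (f x)) (rev w)"
      using sw by (subst pos_word_prod_adjoint) (auto intro!: c dest: nth_mem)
    moreover have "pos_word_prod n (\<lambda>_ x. mat_adjoint (f x)) (rev w) \<in> carrier_mat n n"
      using sw c by (intro pos_word_prod_const_carrier[of _ S]) simp_all
    ultimately show ?thesis using mat_span_generator[OF finW rw] by simp
  qed
  ultimately show "A \<in> mat_span n (pos_word_prod n (\<lambda>_ x. mat_adjoint (f x))) ?W"
    by (rule mat_span_trans[OF finW finW, rotated])
qed

lemma primitive_cp_iff_kraus_rep: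
  "primitive_cp n L \<longleftrightarrow> (\<exists>Ks m. kraus_rep n L (\<lambda>i. Ks ! i) {..<length Ks}
     \<and> word_spanning n (\<lambda>i. Ks ! i) {..<length Ks} m)"
proof -
  have span_iff: "(\<forall>A\<in>carrier_mat n n. \<exists>c. A = msum n (\<lambda>w. c w \<cdot>\<^sub>m word_prod n Ks w) (words (length Ks) m))
      \<longleftrightarrow> word_spanning n (\<lambda>i. Ks ! i) {..<length Ks} m"
    if "\<forall>K\<in>set Ks. K \<in> carrier_mat n n" for Ks :: "complex mat list" and m
  proof -
    have "msum n (\<lambda>w. c w \<cdot>\<^sub>m word_prod n Ks w) (words (length Ks) m)
        = mat_lincomb n c (pos_word_prod n (\<lambda>_ i. Ks ! i)) (pos_words (\<lambda>_. {..<length Ks}) m)" for c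
      unfolding word_prod_eq_pos_word_prod words_eq_pos_words
      by (rule msum_smult_eq_mat_lincomb, rule pos_word_prod_carrier_pos_words) (use that in auto)
    thus ?thesis by (auto simp: word_spanning_def mat_span_def)
  qed
  have kraus_iff: "(\<forall>K\<in>set Ks. K \<in> carrier_mat n n) \<and>
      (\<forall>X\<in>carrier_mat n n. L X = msum n (\<lambda>i. Ks ! i * X * mat_adjoint (Ks ! i)) {..<length Ks})
      \<longleftrightarrow> kraus_rep n L (\<lambda>i. Ks ! i) {..<length Ks}" for Ks
    by (auto simp: kraus_rep_def all_set_conv_all_nth)
  show ?thesis
  proof
    assume "primitive_cp n L"
    then obtain Ks m where c: "\<forall>K\<in>set Ks. K \<in> carrier_mat n n"
      and L: "\<forall>X\<in>carrier_mat n n. L X = msum n (\<lambda>i. Ks ! i * X * mat_adjoint (Ks ! i)) {..<length Ks}"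
      and sp: "\<forall>A\<in>carrier_mat n n. \<exists>c. A = msum n (\<lambda>w. c w \<cdot>\<^sub>m word_prod n Ks w) (words (length Ks) m)"
      unfolding primitive_cp_def by blast
    show "\<exists>Ks m. kraus_rep n L (\<lambda>i. Ks ! i) {..<length Ks} \<and> word_spanning n (\<lambda>i. Ks ! i) {..<length Ks} m"
      using kraus_iff[of Ks] span_iff[OF c, of m] c L sp by blast
  next
    assume "\<exists>Ks m. kraus_rep n L (\<lambda>i. Ks ! i) {..<length Ks} \<and> word_spanning n (\<lambda>i. Ks ! i) {..<length Ks} m"
    then obtain Ks m where K: "kraus_rep n L (\<lambda>i. Ks ! i) {..<length Ks}"
      and sp: "word_spanning n (\<lambda>i. Ks ! i) {..<length Ks} m" by blast
    have c: "\<forall>K\<in>set Ks. K \<in> carrier_mat n n" using K kraus_iff by blast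
    show "primitive_cp n L"
      unfolding primitive_cp_def using K sp kraus_iff[of Ks] span_iff[OF c, of m] by blast
  qed
qed

lemma kraus_rep_primitive_cp:
  assumes K: "kraus_rep n L f S" and sp: "word_spanning n f S m"
  shows "primitive_cp n L"
proof -
  obtain xs where xs: "set xs = S" "distinct xs" using finite_distinct_list kraus_repD(1)[OF K] by blast
  define Ks where "Ks = map f xs"
  have S: "S = (\<lambda>i. xs ! i) ` {..<length Ks}" using xs(1) by (auto simp: Ks_def in_set_conv_nth)
  have inj: "inj_on (\<lambda>i. xs ! i) {..<length Ks}"
    using xs(2) by (simp add: Ks_def inj_on_def nth_eq_iff_index_eq)
  have Ks: "Ks ! i = f (xs ! i)" if "i \<in> {..<length Ks}" for i using that by (simp add: Ks_def)
  have "kraus_rep n L (\<lambda>i. f (xs ! i)) {..<length Ks}"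
    using K unfolding S kraus_rep_reindex[OF inj] .
  hence "kraus_rep n L (\<lambda>i. Ks ! i) {..<length Ks}"
    by (subst kraus_rep_cong[where g = "\<lambda>i. f (xs ! i)"]) (simp_all add: Ks)
  moreover have "word_spanning n (\<lambda>i. Ks ! i) {..<length Ks} m"
  proof (rule word_spanning_mono[OF kraus_repD(1)[OF K] _ _ _ sp])
    show "f x \<in> mat_span n (\<lambda>i. Ks ! i) {..<length Ks}" if "x \<in> S" for x
    proof -
      from that obtain i where i: "i \<in> {..<length Ks}" and x: "x = xs ! i" unfolding S by blast
      have "Ks ! i \<in> carrier_mat n n" using K i S by (simp add: Ks kraus_repD)
      with i have "Ks ! i \<in> mat_span n (\<lambda>i. Ks ! i) {..<length Ks}" by (intro mat_span_generator) simp_all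
      thus ?thesis using Ks[OF i] x by simp
    qed
    show "Ks ! i \<in> carrier_mat n n" if "i \<in> {..<length Ks}" for i
      using K that S by (simp add: Ks kraus_repD)
  qed simp
  ultimately show ?thesis unfolding primitive_cp_iff_kraus_rep by blast
qed

section \<open>Positivity of the spectral radius\<close>

lemma jordan_block_zero_pow_eq_0: "na \<le> k \<Longrightarrow> jordan_block na (0::complex) ^\<^sub>m k = 0\<^sub>m na na"
  unfolding jordan_block_zero_pow by (intro eq_matI) auto

lemma jordan_nf_blocks_spectral_radius_le_0:
  fixes A :: "complex mat"
  assumes A: "A \<in> carrier_mat N N" and N: "N > 0" and sr: "spectral_radius A \<le> 0"
    and jnf: "jordan_nf A n_as" and mem: "(na, a) \<in> set n_as"
  shows "a = 0 \<and> na \<le> N"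
proof -
  have deg: "degree (char_poly A) = N" using degree_monic_char_poly[OF A] by simp
  with N have cp: "char_poly A \<noteq> 0" by auto
  have "na \<in> fst ` set n_as" using mem by (rule image_eqI[rotated]) simp
  moreover have "0 \<notin> fst ` set n_as" using jnf by (simp add: jordan_nf_def)
  ultimately have "0 < na" by (cases na) auto
  also have order: "na \<le> order a (char_poly A)" by (rule jordan_nf_block_size_order_bound[OF jnf mem])
  finally have "poly (char_poly A) a = 0" by (simp add: order_root)
  hence "norm a \<in> norm ` spectrum A" by (simp add: spectrum_def eigenvalue_root_char_poly[OF A])
  hence "norm a \<le> spectral_radius A" by (rule spectral_radius_mem_max(2)[OF A N])
  with sr have "cmod a \<le> 0" by linarith
  hence "a = 0" by simp
  moreover have "na \<le> N" using order order_degree[OF cp, of a] deg by linarith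
  ultimately show ?thesis ..
qed

lemma spectral_radius_le_0_nilpotent:
  fixes A :: "complex mat"
  assumes A: "A \<in> carrier_mat N N" and N: "N > 0" and sr: "spectral_radius A \<le> 0" and k: "N \<le> k"
  shows "A ^\<^sub>m k = 0\<^sub>m N N"
proof -
  obtain as where "char_poly A = (\<Prod>a\<leftarrow>as. [:- a, 1:])" using char_poly_factorized[OF A] by blast
  then obtain n_as where jnf: "jordan_nf A n_as" using jordan_nf_exists[OF A] by blast
  obtain P Q where P: "P \<in> carrier_mat N N" and Q: "Q \<in> carrier_mat N N"
    and pow: "\<And>k. A ^\<^sub>m k = P * jordan_matrix n_as ^\<^sub>m k * Q"
    using jordan_nf_powE[OF A jnf] by blast
  note block = jordan_nf_blocks_spectral_radius_le_0[OF A N sr jnf]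
  have "similar_mat A (jordan_matrix n_as)" using jnf by (simp add: jordan_nf_def)
  then obtain N' where "{A, jordan_matrix n_as} \<subseteq> carrier_mat N' N'" by (rule similar_matD[elim_format]) blast
  with A have J: "jordan_matrix n_as \<in> carrier_mat N N" by auto
  have "jordan_matrix n_as ^\<^sub>m k = 0\<^sub>m N N"
  proof (rule eq_matI)
    fix i j assume ij: "i < dim_row (0\<^sub>m N N :: complex mat)" "j < dim_col (0\<^sub>m N N :: complex mat)"
    have "(jordan_matrix n_as ^\<^sub>m k) $$ (i,j) \<in> elements_mat (jordan_matrix n_as ^\<^sub>m k)"
      using ij J by (intro elements_matI[OF pow_carrier_mat[OF J]]) auto
    also have "\<dots> \<subseteq> {0} \<union> \<Union> (set (map elements_mat (map (\<lambda>(n,a). jordan_block n a ^\<^sub>m k) n_as)))"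
      unfolding jordan_matrix_pow by (rule elements_diag_block_mat)
    also have "\<dots> \<subseteq> {0}"
    proof -
      have "elements_mat (jordan_block na a ^\<^sub>m k) \<subseteq> {0}" if "(na, a) \<in> set n_as" for na a
        using block[OF that] k by (simp add: jordan_block_zero_pow_eq_0)
      thus ?thesis by auto
    qed
    finally show "(jordan_matrix n_as ^\<^sub>m k) $$ (i,j) = 0\<^sub>m N N $$ (i,j)" using ij by simp
  qed (use J in auto)
  thus ?thesis unfolding pow using P Q by simp
qed

lemma index_decompose:
  assumes "p < a * (d::nat)"
  shows "p div d < a" "p mod d < d"
proof -
  have "d > 0" using assms by (cases d) auto
  thus "p div d < a" "p mod d < d" using assms by (simp_all add: less_mult_imp_div_less)
qed

lemma index_compose:
  assumes "i < a" "k < (d::nat)"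
  shows "i * d + k < a * d" "(i * d + k) div d = i" "(i * d + k) mod d = k"
proof -
  have "i * d + k < Suc i * d" using assms by simp
  also have "\<dots> \<le> a * d" using assms by (intro mult_le_mono1) simp
  finally show "i * d + k < a * d" .
qed (use assms in simp_all)

lemma sum_lessThan_mult:
  "(\<Sum>q<a * d. g q) = (\<Sum>i<a. \<Sum>k<d. g (i * d + (k::nat)))"
proof (induct a)
  case (Suc a)
  have "(\<Sum>q<Suc a * d. g q) = (\<Sum>q\<in>{0..<a * d}. g q) + (\<Sum>q\<in>{a * d..<a * d + d}. g q)"
    by (subst sum.atLeastLessThan_concat) (auto simp: lessThan_atLeast0 add.commute)
  also have "(\<Sum>q\<in>{a * d..<a * d + d}. g q) = (\<Sum>k<d. g (a * d + k))"
  proof -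
    have "(\<Sum>q\<in>{a * d..<a * d + d}. g q) = (\<Sum>q\<in>{0 + a * d..<d + a * d}. g q)" by (simp add: add.commute)
    also have "\<dots> = (\<Sum>k\<in>{0..<d}. g (k + a * d))" by (rule sum.shift_bounds_nat_ivl)
    finally show ?thesis by (simp add: lessThan_atLeast0 add.commute)
  qed
  finally show ?case using Suc by (simp add: lessThan_atLeast0)
qed simp

definition vec_of_mat :: "nat \<Rightarrow> complex mat \<Rightarrow> complex vec" where
  "vec_of_mat n X = vec (n * n) (\<lambda>p. X $$ (p div n, p mod n))"

lemma unit_mat_eq_mat_unit: "unit_mat n q = mat_unit n (q div n) (q mod n)"
  unfolding unit_mat_def mat_unit_def by simp

lemma kraus_rep_index_linear:
  assumes K: "kraus_rep n L f S" and X: "X \<in> carrier_mat n n" and ab: "a < n" "b < n"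
  shows "L X $$ (a,b) = (\<Sum>q<n * n. X $$ (q div n, q mod n) * L (unit_mat n q) $$ (a,b))"
proof -
  have cf: "\<And>x. x \<in> S \<Longrightarrow> f x \<in> carrier_mat n n" by (rule kraus_repD(2)[OF K])
  have adj: "mat_adjoint (f x) $$ (j,b) = cnj (f x $$ (b,j))" if "x \<in> S" "j < n" for x j
    using cf[OF that(1)] that(2) ab by auto
  have "L X $$ (a,b) = (\<Sum>x\<in>S. \<Sum>i<n. \<Sum>j<n. f x $$ (a,i) * X $$ (i,j) * cnj (f x $$ (b,j)))"
    using X ab cf by (auto simp: kraus_repD(3)[OF K] index_mult_mat3[of _ n] adj intro!: sum.cong)
  also have "\<dots> = (\<Sum>i<n. \<Sum>x\<in>S. \<Sum>j<n. f x $$ (a,i) * X $$ (i,j) * cnj (f x $$ (b,j)))"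
    by (rule sum.swap)
  also have "\<dots> = (\<Sum>i<n. \<Sum>j<n. \<Sum>x\<in>S. f x $$ (a,i) * X $$ (i,j) * cnj (f x $$ (b,j)))"
    by (rule sum.cong[OF refl], rule sum.swap)
  also have "\<dots> = (\<Sum>i<n. \<Sum>j<n. X $$ (i,j) * (\<Sum>x\<in>S. f x $$ (a,i) * cnj (f x $$ (b,j))))"
    by (simp add: sum_distrib_left mult_ac)
  also have "\<dots> = (\<Sum>i<n. \<Sum>j<n. X $$ (i,j) * L (mat_unit n i j) $$ (a,b))"
    using ab cf by (auto simp: kraus_repD(3)[OF K] sandwich_mat_unit intro!: sum.cong)
  also have "\<dots> = (\<Sum>q<n * n. X $$ (q div n, q mod n) * L (unit_mat n q) $$ (a,b))"
    unfolding sum_lessThan_mult by (intro sum.cong refl) (simp add: index_compose unit_mat_eq_mat_unit)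
  finally show ?thesis .
qed

lemma superop_mat_mult_vec_of_mat:
  assumes K: "kraus_rep n L f S" and X: "X \<in> carrier_mat n n"
  shows "superop_mat n L *\<^sub>v vec_of_mat n X = vec_of_mat n (L X)"
proof (rule eq_vecI)
  fix p assume "p < dim_vec (vec_of_mat n (L X))"
  hence p: "p < n * n" by (simp add: vec_of_mat_def)
  note pd = index_decompose[OF p]
  have "(superop_mat n L *\<^sub>v vec_of_mat n X) $ p
      = (\<Sum>q<n * n. L (unit_mat n q) $$ (p div n, p mod n) * X $$ (q div n, q mod n))"
    using p by (simp add: mult_mat_vec_def scalar_prod_def superop_mat_def vec_of_mat_def lessThan_atLeast0)
  also have "\<dots> = L X $$ (p div n, p mod n)"
    by (simp add: kraus_rep_index_linear[OF K X pd(1,2)] mult.commute)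
  finally show "(superop_mat n L *\<^sub>v vec_of_mat n X) $ p = vec_of_mat n (L X) $ p"
    using p by (simp add: vec_of_mat_def)
qed (simp add: vec_of_mat_def superop_mat_def)

lemma superop_mat_pow_mult_vec_of_mat:
  assumes K: "kraus_rep n L f S" and X: "X \<in> carrier_mat n n"
  shows "(superop_mat n L ^\<^sub>m k) *\<^sub>v vec_of_mat n X = vec_of_mat n (comp_down (\<lambda>_. L) k X)"
  using X
proof (induct k arbitrary: X)
  case 0
  have "vec_of_mat n X \<in> carrier_vec (n * n)" by (simp add: vec_of_mat_def)
  thus ?case by (simp add: superop_mat_def)
next
  case (Suc k)
  have S: "superop_mat n L \<in> carrier_mat (n * n) (n * n)" by (simp add: superop_mat_def)
  have v: "vec_of_mat n X \<in> carrier_vec (n * n)" by (simp add: vec_of_mat_def)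
  have "(superop_mat n L ^\<^sub>m Suc k) *\<^sub>v vec_of_mat n X
      = (superop_mat n L ^\<^sub>m k) *\<^sub>v (superop_mat n L *\<^sub>v vec_of_mat n X)"
    by (simp add: assoc_mult_mat_vec[OF pow_carrier_mat[OF S] S v])
  also have "\<dots> = vec_of_mat n (comp_down (\<lambda>_. L) k (L X))"
    using Suc kraus_rep_carrier[OF K Suc(2)] by (simp add: superop_mat_mult_vec_of_mat[OF K])
  finally show ?case by simp
qed

lemma vec_of_mat_eq_0_imp:
  assumes X: "X \<in> carrier_mat n n" and z: "vec_of_mat n X = 0\<^sub>v (n * n)"
  shows "X = 0\<^sub>m n n"
proof (rule eq_matI)
  fix i j assume "i < dim_row (0\<^sub>m n n :: complex mat)" "j < dim_col (0\<^sub>m n n :: complex mat)"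
  hence ij: "i < n" "j < n" by simp_all
  note ix = index_compose[OF ij]
  have "X $$ (i,j) = vec_of_mat n X $ (i * n + j)"
    unfolding vec_of_mat_def using ix(1) by (simp only: index_vec ix(2,3))
  also have "\<dots> = 0" unfolding z using ix(1) by simp
  finally show "X $$ (i,j) = 0\<^sub>m n n $$ (i,j)" using ij by simp
qed (use X in simp_all)

lemma mtrace_msum:
  assumes "\<And>x. x \<in> S \<Longrightarrow> h x \<in> carrier_mat n n"
  shows "mtrace (msum n h S) = (\<Sum>x\<in>S. mtrace (h x))"
proof -
  have "mtrace (msum n h S) = (\<Sum>i<n. \<Sum>x\<in>S. h x $$ (i,i))" by (simp add: mtrace_def)
  also have "\<dots> = (\<Sum>x\<in>S. \<Sum>i<n. h x $$ (i,i))" by (rule sum.swap)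
  also have "\<dots> = (\<Sum>x\<in>S. mtrace (h x))"
    by (intro sum.cong refl) (simp add: mtrace_def carrier_matD[OF assms])
  finally show ?thesis .
qed

text \<open>If L (1) vanishes then so does every Kraus operator, since the trace of L (1) is the sum
  of their squared Hilbert-Schmidt norms.\<close>

lemma kraus_op_eq_0_if_map_one_eq_0:
  assumes K: "kraus_rep n L f S" and L0: "L (1\<^sub>m n) = 0\<^sub>m n n" and x: "x \<in> S"
  shows "f x = 0\<^sub>m n n"
proof -
  have cf: "\<And>x. x \<in> S \<Longrightarrow> f x \<in> carrier_mat n n" by (rule kraus_repD(2)[OF K])
  define h where "h x = (\<Sum>i<n. \<Sum>j<n. (cmod (f x $$ (i,j)))\<^sup>2)" for x
  have "0 = mtrace (L (1\<^sub>m n))" by (simp add: L0 mtrace_def)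
  also have "\<dots> = (\<Sum>x\<in>S. mtrace (f x * 1\<^sub>m n * mat_adjoint (f x)))"
    using kraus_repD(3)[OF K one_carrier_mat] mtrace_msum[of S _ n] cf by simp
  also have "\<dots> = (\<Sum>x\<in>S. complex_of_real (h x))"
  proof (rule sum.cong[OF refl])
    fix y assume "y \<in> S"
    with cf have c: "f y \<in> carrier_mat n n" by simp
    hence "f y * 1\<^sub>m n = f y" by (rule right_mult_one_mat)
    thus "mtrace (f y * 1\<^sub>m n * mat_adjoint (f y)) = complex_of_real (h y)"
      unfolding h_def hs_inner_self[symmetric] by (simp only: mtrace_mult_adjoint[OF c])
  qed
  finally have "complex_of_real (\<Sum>x\<in>S. h x) = 0" by (simp only: of_real_sum)
  hence "(\<Sum>x\<in>S. h x) = 0" by (simp only: of_real_eq_0_iff)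
  moreover have "\<forall>x\<in>S. 0 \<le> h x" by (simp add: h_def sum_nonneg)
  ultimately have "h x = 0" using kraus_repD(1)[OF K] x by (simp add: sum_nonneg_eq_0_iff)
  hence "hs_inner n (f x) (f x) = 0" by (simp add: hs_inner_self h_def)
  thus ?thesis using hs_inner_self_eq_0_iff[OF cf[OF x]] by simp
qed

lemma one_in_word_span:
  assumes fin: "finite S" and c: "\<And>x. x \<in> S \<Longrightarrow> f x \<in> carrier_mat n n"
    and sp: "word_spanning n f S m"
  shows "1\<^sub>m n \<in> mat_span n (pos_word_prod n (\<lambda>_. f)) (pos_words (\<lambda>_. S) (m * k))"
proof (induct k)
  case 0
  show ?case using mat_span_generator[of "{[]}" "[]" "pos_word_prod n (\<lambda>_. f)" n] by simp
next
  case (Suc k)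
  let ?g = "pos_word_prod n (\<lambda>_. f)"
  have fW: "finite (pos_words (\<lambda>_. S) j)" for j by (simp add: fin finite_pos_words)
  have cW: "?g w \<in> carrier_mat n n" if "w \<in> pos_words (\<lambda>_. S) j" for j w
    using that c by (intro pos_word_prod_const_carrier[of _ S]) (simp_all add: pos_words_const)
  have "1\<^sub>m n \<in> mat_span n ?g (pos_words (\<lambda>_. S) m)" using sp by (auto simp: word_spanning_def)
  from mat_span_mult[OF cW cW this Suc]
  have "1\<^sub>m n \<in> mat_span n (\<lambda>p. ?g (fst p) * ?g (snd p)) (pos_words (\<lambda>_. S) m \<times> pos_words (\<lambda>_. S) (m * k))"
    by simp
  moreover have "?g (fst p) * ?g (snd p) \<in> mat_span n ?g (pos_words (\<lambda>_. S) (m * Suc k))"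
    if p: "p \<in> pos_words (\<lambda>_. S) m \<times> pos_words (\<lambda>_. S) (m * k)" for p
  proof -
    have uv: "fst p @ snd p \<in> pos_words (\<lambda>_. S) (m * Suc k)" using p by (auto simp: pos_words_const)
    have "?g (fst p) * ?g (snd p) = ?g (fst p @ snd p)"
      using p c by (intro pos_word_prod_append[where S = S, symmetric]) (auto simp: pos_words_const)
    thus ?thesis using mat_span_generator[OF fW uv] cW[OF uv] by simp
  qed
  ultimately show ?case by (rule mat_span_trans[OF finite_cartesian_product[OF fW fW] fW, rotated])
qed

lemma word_spanning_spectral_radius_pos:
  assumes K: "kraus_rep n L f S" and sp: "word_spanning n f S m" and m: "m \<ge> 1" and n: "n > 0"
  shows "map_spectral_radius n L > 0"
proof (rule ccontr)
  assume "\<not> map_spectral_radius n L > 0"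
  hence sr: "spectral_radius (superop_mat n L) \<le> 0" by (simp add: map_spectral_radius_def)
  let ?K = "m * (n * n)"
  have S: "superop_mat n L \<in> carrier_mat (n * n) (n * n)" by (simp add: superop_mat_def)
  have "n * n \<le> ?K" using m by simp
  hence nil: "superop_mat n L ^\<^sub>m ?K = 0\<^sub>m (n * n) (n * n)"
    using spectral_radius_le_0_nilpotent[OF S _ sr] n by simp
  have KK: "kraus_rep n (comp_down (\<lambda>_. L) ?K) (pos_word_prod n (\<lambda>_. f)) (pos_words (\<lambda>_. S) ?K)"
    using K by (intro kraus_rep_comp_down)
  have "vec_of_mat n (comp_down (\<lambda>_. L) ?K (1\<^sub>m n)) = (superop_mat n L ^\<^sub>m ?K) *\<^sub>v vec_of_mat n (1\<^sub>m n)"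
    by (rule superop_mat_pow_mult_vec_of_mat[OF K one_carrier_mat, symmetric])
  also have "\<dots> = 0\<^sub>v (n * n)"
    unfolding nil by (intro eq_vecI) (simp_all add: vec_of_mat_def scalar_prod_def)
  finally have "comp_down (\<lambda>_. L) ?K (1\<^sub>m n) = 0\<^sub>m n n"
    by (rule vec_of_mat_eq_0_imp[OF kraus_rep_carrier[OF KK one_carrier_mat]])
  hence z: "\<And>w. w \<in> pos_words (\<lambda>_. S) ?K \<Longrightarrow> pos_word_prod n (\<lambda>_. f) w = 0\<^sub>m n n"
    by (rule kraus_op_eq_0_if_map_one_eq_0[OF KK])
  have "1\<^sub>m n \<in> mat_span n (pos_word_prod n (\<lambda>_. f)) (pos_words (\<lambda>_. S) ?K)"
    by (rule one_in_word_span[OF kraus_repD(1)[OF K] kraus_repD(2)[OF K] sp])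
  from mat_span_of_zeros[OF z this] have "1\<^sub>m n = (0\<^sub>m n n :: complex mat)" .
  from arg_cong[OF this, of "\<lambda>A. A $$ (0,0)"] n show False by simp
qed

lemma not_word_spanning_0: "n \<ge> 2 \<Longrightarrow> \<not> word_spanning n f S 0"
proof
  assume "n \<ge> 2" "word_spanning n f S 0"
  hence "mat_unit n 0 1 \<in> mat_span n (pos_word_prod n (\<lambda>_. f)) {[]}" by (auto simp: word_spanning_def)
  then obtain c where "mat_unit n 0 1 = mat_lincomb n c (pos_word_prod n (\<lambda>_. f)) {[]}" by (rule mat_spanE)
  from arg_cong[OF this, of "\<lambda>A. A $$ (0,1)"] \<open>n \<ge> 2\<close> show False by (simp add: mat_unit_def)
qed

lemma word_spanning_1_dim:
  assumes "finite S" "x \<in> S" "f x \<in> carrier_mat 1 1" "f x \<noteq> 0\<^sub>m 1 1"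
  shows "word_spanning 1 f S 1"
  unfolding word_spanning_def
proof
  fix A :: "complex mat" assume A: "A \<in> carrier_mat 1 1"
  have fx: "f x $$ (0,0) \<noteq> 0" using assms(3,4) by (auto intro!: eq_matI)
  have fW: "finite (pos_words (\<lambda>_. S) 1)" by (simp add: assms(1) finite_pos_words)
  have x: "[x] \<in> pos_words (\<lambda>_. S) 1" using assms(2) by (simp add: pos_words_const)
  define c where "c = A $$ (0,0) / f x $$ (0,0)"
  have "A = c \<cdot>\<^sub>m pos_word_prod 1 (\<lambda>_. f) [x]"
    using A assms(3) fx by (intro eq_matI) (auto simp: c_def)
  moreover have "pos_word_prod 1 (\<lambda>_. f) [x] \<in> mat_span 1 (pos_word_prod 1 (\<lambda>_. f)) (pos_words (\<lambda>_. S) 1)"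
    using assms(3) by (intro mat_span_generator[OF fW x]) simp
  ultimately show "A \<in> mat_span 1 (pos_word_prod 1 (\<lambda>_. f)) (pos_words (\<lambda>_. S) 1)"
    by (simp add: mat_span_smult)
qed

text \<open>In dimension 1 every family spans with words of length 0, so a nonzero Kraus operator
  has to be assumed there.\<close>

lemma kraus_rep_spectral_radius_pos:
  assumes K: "kraus_rep n L f S" and sp: "word_spanning n f S m" and n: "n > 0"
    and nz: "n = 1 \<Longrightarrow> \<exists>x\<in>S. f x \<noteq> 0\<^sub>m 1 1"
  shows "map_spectral_radius n L > 0"
proof (cases "m \<ge> 1")
  case True thus ?thesis by (rule word_spanning_spectral_radius_pos[OF K sp _ n])
next
  case False
  hence m0: "m = 0" by simp
  show ?thesis
  proof (cases "n = 1")
    case True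
    with nz obtain x where x: "x \<in> S" "f x \<noteq> 0\<^sub>m 1 1" by blast
    have "word_spanning 1 f S 1"
      using x K True by (intro word_spanning_1_dim[of S x f]) (simp_all add: kraus_repD)
    with True have "word_spanning n f S 1" by simp
    thus ?thesis by (rule word_spanning_spectral_radius_pos[OF K _ _ n]) simp
  next
    case False
    with n sp m0 not_word_spanning_0[of n f S] show ?thesis by simp
  qed
qed

section \<open>The matrix exponential\<close>

lemma pow_mat_add: assumes A: "A \<in> carrier_mat N N"
  shows "A ^\<^sub>m (p + q) = A ^\<^sub>m p * A ^\<^sub>m q"
proof (induct q)
  case 0 thus ?case using A by simp
next
  case (Suc q)
  have "A ^\<^sub>m (p + Suc q) = A ^\<^sub>m (p + q) * A" by simp
  also have "\<dots> = A ^\<^sub>m p * A ^\<^sub>m q * A" by (simp add: Suc)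
  also have "\<dots> = A ^\<^sub>m p * (A ^\<^sub>m q * A)" using A by (simp add: assoc_mult_mat[of _ N N _ N _ N])
  finally show ?case by simp
qed

lemma pow_mat_commute: assumes A: "A \<in> carrier_mat N N"
  shows "A * A ^\<^sub>m k = A ^\<^sub>m k * A"
proof -
  have "A ^\<^sub>m (1 + k) = A ^\<^sub>m (k + 1)" by (simp add: add.commute)
  thus ?thesis using pow_mat_add[OF A, of 1 k] pow_mat_add[OF A, of k 1] A by simp
qed

lemma smult_pow_mat: assumes A: "A \<in> carrier_mat N N"
  shows "(z \<cdot>\<^sub>m A) ^\<^sub>m k = z ^ k \<cdot>\<^sub>m (A ^\<^sub>m k :: complex mat)"
proof (induct k)
  case 0 show ?case using A by (intro eq_matI, auto)
next
  case (Suc k)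
  have "(z \<cdot>\<^sub>m A) ^\<^sub>m Suc k = (z ^ k \<cdot>\<^sub>m A ^\<^sub>m k) * (z \<cdot>\<^sub>m A)" by (simp add: Suc)
  also have "\<dots> = z ^ Suc k \<cdot>\<^sub>m (A ^\<^sub>m Suc k)"
    using A by (simp add: mult_smult_assoc_mat[of _ N N _ N] mult_smult_distrib[of _ N N _ N] smult_smult_mat mult.commute)
  finally show ?case .
qed

lemma mat_adjoint_pow_hermitian: assumes A: "(A::complex mat) \<in> carrier_mat N N" and h: "mat_adjoint A = A"
  shows "mat_adjoint (A ^\<^sub>m k) = A ^\<^sub>m k"
proof (induct k)
  case 0 show ?case using A by simp
next
  case (Suc k)
  have "mat_adjoint (A ^\<^sub>m Suc k) = mat_adjoint A * mat_adjoint (A ^\<^sub>m k)"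
    using A by (simp add: mat_adjoint_mult[of _ N N _ N])
  also have "\<dots> = A * A ^\<^sub>m k" by (simp add: h Suc)
  finally show ?case using pow_mat_commute[OF A] by simp
qed

definition mat_l1_norm :: "complex mat \<Rightarrow> real" where
  "mat_l1_norm A = (\<Sum>i<dim_row A. \<Sum>j<dim_col A. cmod (A $$ (i,j)))"

lemma mat_l1_norm_nonneg: "mat_l1_norm A \<ge> 0" unfolding mat_l1_norm_def by (intro sum_nonneg, simp)

lemma mat_l1_norm_col: assumes "j < dim_col A" shows "(\<Sum>l<dim_row A. cmod (A $$ (l,j))) \<le> mat_l1_norm A"
proof -
  have "(\<Sum>l<dim_row A. cmod (A $$ (l,j))) \<le> (\<Sum>l<dim_row A. \<Sum>j<dim_col A. cmod (A $$ (l,j)))"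
    by (intro sum_mono member_le_sum[of j _ "\<lambda>j. cmod (A $$ (_,j))"], insert assms, auto)
  thus ?thesis by (simp add: mat_l1_norm_def)
qed

lemma pow_entry_bound: assumes A: "A \<in> carrier_mat N N" and ij: "i < N" "j < N"
  shows "cmod ((A ^\<^sub>m k) $$ (i,j)) \<le> mat_l1_norm A ^ k"
  using ij
proof (induct k arbitrary: j)
  case 0 thus ?case using A by simp
next
  case (Suc k)
  have "(A ^\<^sub>m Suc k) $$ (i,j) = (\<Sum>l<N. (A ^\<^sub>m k) $$ (i,l) * A $$ (l,j))"
    by (simp only: pow_mat.simps, rule index_mult_mat_sum[OF pow_carrier_mat[OF A] A Suc(2,3)])
  hence "cmod ((A ^\<^sub>m Suc k) $$ (i,j)) \<le> (\<Sum>l<N. cmod ((A ^\<^sub>m k) $$ (i,l) * A $$ (l,j)))"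
    by (simp only: norm_sum)
  also have "\<dots> = (\<Sum>l<N. cmod ((A ^\<^sub>m k) $$ (i,l)) * cmod (A $$ (l,j)))"
    by (simp only: norm_mult)
  also have "\<dots> \<le> (\<Sum>l<N. mat_l1_norm A ^ k * cmod (A $$ (l,j)))"
    by (intro sum_mono mult_right_mono, rule Suc(1), insert Suc(2), auto)
  also have "\<dots> = mat_l1_norm A ^ k * (\<Sum>l<N. cmod (A $$ (l,j)))" by (simp add: sum_distrib_left)
  also have "\<dots> \<le> mat_l1_norm A ^ k * mat_l1_norm A"
    by (intro mult_left_mono, insert mat_l1_norm_col[of j A] A Suc(3), auto simp: mat_l1_norm_nonneg)
  finally show ?case by (simp add: mult.commute)
qed

lemma mexp_carrier[simp]: assumes "A \<in> carrier_mat N N" shows "mexp A \<in> carrier_mat N N"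
proof -
  have "dim_row A = N" "dim_col A = N" using assms by auto
  thus ?thesis unfolding mexp_def by simp
qed

lemma mexp_index: "i < dim_row A \<Longrightarrow> j < dim_col A \<Longrightarrow> mexp A $$ (i,j) = (\<Sum>k. (A ^\<^sub>m k) $$ (i,j) / of_nat (fact k))"
  by (simp add: mexp_def)

definition exp_series_term :: "complex \<Rightarrow> complex mat \<Rightarrow> nat \<Rightarrow> nat \<Rightarrow> nat \<Rightarrow> complex" where
  "exp_series_term z A i j k = z ^ k * (A ^\<^sub>m k) $$ (i,j) / of_nat (fact k)"

lemma exp_series_term_summable: assumes A: "A \<in> carrier_mat N N" and ij: "i < N" "j < N"
  shows "summable (\<lambda>k. norm (exp_series_term z A i j k))"
proof (rule summable_comparison_test[OF _ summable_exp[of "cmod z * mat_l1_norm A"]])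
  show "\<exists>M. \<forall>k\<ge>M. norm (norm (exp_series_term z A i j k)) \<le> inverse (fact k) * (cmod z * mat_l1_norm A) ^ k"
  proof (intro exI allI impI)
    fix k :: nat
    have "norm (norm (exp_series_term z A i j k)) = cmod z ^ k * cmod ((A ^\<^sub>m k) $$ (i,j)) / fact k"
      by (simp add: exp_series_term_def norm_mult norm_divide norm_power)
    also have "\<dots> \<le> cmod z ^ k * mat_l1_norm A ^ k / fact k"
      by (intro divide_right_mono mult_left_mono pow_entry_bound[OF A ij], auto)
    also have "\<dots> = inverse (fact k) * (cmod z * mat_l1_norm A) ^ k" by (simp add: power_mult_distrib field_simps)
    finally show "norm (norm (exp_series_term z A i j k)) \<le> inverse (fact k) * (cmod z * mat_l1_norm A) ^ k" .
  qed
qed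

lemma mexp_smult_index: assumes A: "A \<in> carrier_mat N N" and ij: "i < N" "j < N"
  shows "mexp (z \<cdot>\<^sub>m A) $$ (i,j) = (\<Sum>k. exp_series_term z A i j k)"
proof -
  have "mexp (z \<cdot>\<^sub>m A) $$ (i,j) = (\<Sum>k. ((z \<cdot>\<^sub>m A) ^\<^sub>m k) $$ (i,j) / of_nat (fact k))"
    using A ij by (simp add: mexp_index)
  also have "\<dots> = (\<Sum>k. exp_series_term z A i j k)"
    by (rule arg_cong[of _ _ suminf], rule ext, insert A ij, simp add: smult_pow_mat[OF A] exp_series_term_def)
  finally show ?thesis .
qed

lemma exp_series_term_cauchy_product:
  assumes A: "A \<in> carrier_mat N N" and ij: "i < N" "j < N"
  shows "(\<Sum>l<N. \<Sum>p\<le>k. exp_series_term a A i l p * exp_series_term b A l j (k - p)) = exp_series_term (a + b) A i j k"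
proof -
  have "(\<Sum>l<N. \<Sum>p\<le>k. exp_series_term a A i l p * exp_series_term b A l j (k - p))
    = (\<Sum>p\<le>k. \<Sum>l<N. (a ^ p * b ^ (k - p) / (of_nat (fact p) * of_nat (fact (k - p)))) * ((A ^\<^sub>m p) $$ (i,l) * (A ^\<^sub>m (k - p)) $$ (l,j)))"
    unfolding exp_series_term_def by (subst sum.swap, intro sum.cong refl, simp add: field_simps)
  also have "\<dots> = (\<Sum>p\<le>k. (a ^ p * b ^ (k - p) / (of_nat (fact p) * of_nat (fact (k - p)))) * (A ^\<^sub>m k) $$ (i,j))"
  proof (intro sum.cong refl)
    fix p assume "p \<in> {..k}"
    hence pk: "p + (k - p) = k" by simp
    have "(A ^\<^sub>m k) $$ (i,j) = (A ^\<^sub>m p * A ^\<^sub>m (k - p)) $$ (i,j)"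
      using pow_mat_add[OF A, of p "k - p"] pk by simp
    also have "\<dots> = (\<Sum>l<N. (A ^\<^sub>m p) $$ (i,l) * (A ^\<^sub>m (k - p)) $$ (l,j))"
      by (rule index_mult_mat_sum[OF pow_carrier_mat[OF A] pow_carrier_mat[OF A] ij])
    finally show "(\<Sum>l<N. (a ^ p * b ^ (k - p) / (of_nat (fact p) * of_nat (fact (k - p)))) * ((A ^\<^sub>m p) $$ (i,l) * (A ^\<^sub>m (k - p)) $$ (l,j)))
       = (a ^ p * b ^ (k - p) / (of_nat (fact p) * of_nat (fact (k - p)))) * (A ^\<^sub>m k) $$ (i,j)"
      by (simp add: sum_distrib_left)
  qed
  also have "\<dots> = (\<Sum>p\<le>k. of_nat (k choose p) * a ^ p * b ^ (k - p)) * (A ^\<^sub>m k) $$ (i,j) / of_nat (fact k)"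
  proof -
    have "\<And>p. p \<in> {..k} \<Longrightarrow> a ^ p * b ^ (k - p) / (of_nat (fact p) * of_nat (fact (k - p))) =
      of_nat (k choose p) * a ^ p * b ^ (k - p) / of_nat (fact k)"
    proof -
      fix p assume "p \<in> {..k}" hence pk: "p \<le> k" by simp
      have "(of_nat (k choose p) :: complex) = fact k / (fact p * fact (k - p))" by (rule binomial_fact[OF pk])
      thus "a ^ p * b ^ (k - p) / (of_nat (fact p) * of_nat (fact (k - p))) =
        of_nat (k choose p) * a ^ p * b ^ (k - p) / of_nat (fact k)"
        by (simp add: field_simps)
    qed
    hence "(\<Sum>p\<le>k. (a ^ p * b ^ (k - p) / (of_nat (fact p) * of_nat (fact (k - p)))) * (A ^\<^sub>m k) $$ (i,j))
      = (\<Sum>p\<le>k. of_nat (k choose p) * a ^ p * b ^ (k - p) / of_nat (fact k) * (A ^\<^sub>m k) $$ (i,j))"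
      by (intro sum.cong refl, simp)
    thus ?thesis by (simp add: sum_distrib_right sum_divide_distrib)
  qed
  also have "\<dots> = exp_series_term (a + b) A i j k" by (simp add: binomial_ring exp_series_term_def)
  finally show ?thesis .
qed

lemma mexp_add: assumes A: "A \<in> carrier_mat N N"
  shows "mexp (a \<cdot>\<^sub>m A) * mexp (b \<cdot>\<^sub>m A) = mexp ((a + b) \<cdot>\<^sub>m A)"
proof (rule eq_matI)
  fix i j assume "i < dim_row (mexp ((a + b) \<cdot>\<^sub>m A))" "j < dim_col (mexp ((a + b) \<cdot>\<^sub>m A))"
  hence ij: "i < N" "j < N" using A by (auto simp: mexp_def)
  have cA: "mexp (a \<cdot>\<^sub>m A) \<in> carrier_mat N N" "mexp (b \<cdot>\<^sub>m A) \<in> carrier_mat N N" using A by simp_all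
  have "\<And>l. l < N \<Longrightarrow> (\<lambda>k. \<Sum>p\<le>k. exp_series_term a A i l p * exp_series_term b A l j (k - p)) sums
      (mexp (a \<cdot>\<^sub>m A) $$ (i,l) * mexp (b \<cdot>\<^sub>m A) $$ (l,j))"
    by (simp add: mexp_smult_index[OF A] ij, rule Cauchy_product_sums, auto intro: exp_series_term_summable[OF A] ij)
  hence "(\<lambda>k. \<Sum>l<N. \<Sum>p\<le>k. exp_series_term a A i l p * exp_series_term b A l j (k - p)) sums
      (\<Sum>l<N. mexp (a \<cdot>\<^sub>m A) $$ (i,l) * mexp (b \<cdot>\<^sub>m A) $$ (l,j))"
    by (intro sums_sum, simp)
  also have "(\<Sum>l<N. mexp (a \<cdot>\<^sub>m A) $$ (i,l) * mexp (b \<cdot>\<^sub>m A) $$ (l,j)) = (mexp (a \<cdot>\<^sub>m A) * mexp (b \<cdot>\<^sub>m A)) $$ (i,j)"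
    by (rule index_mult_mat_sum[OF cA ij, symmetric])
  also have "(\<lambda>k. \<Sum>l<N. \<Sum>p\<le>k. exp_series_term a A i l p * exp_series_term b A l j (k - p)) = (\<lambda>k. exp_series_term (a + b) A i j k)"
    by (rule ext) (rule exp_series_term_cauchy_product[OF A ij])
  finally have "(\<lambda>k. exp_series_term (a + b) A i j k) sums (mexp (a \<cdot>\<^sub>m A) * mexp (b \<cdot>\<^sub>m A)) $$ (i,j)" .
  from sums_unique[OF this] show "(mexp (a \<cdot>\<^sub>m A) * mexp (b \<cdot>\<^sub>m A)) $$ (i,j) = mexp ((a + b) \<cdot>\<^sub>m A) $$ (i,j)"
    by (simp add: mexp_smult_index[OF A ij])
qed (insert A, auto simp: mexp_def)

lemma mexp_zero: assumes A: "A \<in> carrier_mat N N"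
  shows "mexp (0 \<cdot>\<^sub>m A) = 1\<^sub>m N"
proof (rule eq_matI)
  fix i j assume "i < dim_row (1\<^sub>m N :: complex mat)" "j < dim_col (1\<^sub>m N :: complex mat)"
  hence ij: "i < N" "j < N" by auto
  have "mexp (0 \<cdot>\<^sub>m A) $$ (i,j) = (\<Sum>k. ((A ^\<^sub>m k) $$ (i,j) / of_nat (fact k)) * 0 ^ k)"
    unfolding mexp_smult_index[OF A ij] exp_series_term_def by (simp add: mult.commute)
  also have "\<dots> = (A ^\<^sub>m 0) $$ (i,j) / of_nat (fact 0)" by (rule powser_zero)
  finally show "mexp (0 \<cdot>\<^sub>m A) $$ (i,j) = 1\<^sub>m N $$ (i,j)" using A ij by simp
qed (insert A, auto simp: mexp_def)

lemma mexp_inverse: assumes A: "A \<in> carrier_mat N N"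
  shows "mexp (a \<cdot>\<^sub>m A) * mexp ((- a) \<cdot>\<^sub>m A) = 1\<^sub>m N"
  using mexp_add[OF A, of a "- a"] mexp_zero[OF A] by simp

lemma mexp_hermitian: assumes A: "A \<in> carrier_mat N N" and h: "mat_adjoint A = A"
  shows "mat_adjoint (mexp (complex_of_real t \<cdot>\<^sub>m A)) = mexp (complex_of_real t \<cdot>\<^sub>m A)"
proof (rule eq_matI)
  fix i j assume "i < dim_row (mexp (complex_of_real t \<cdot>\<^sub>m A))" "j < dim_col (mexp (complex_of_real t \<cdot>\<^sub>m A))"
  hence ij: "i < N" "j < N" using A by (auto simp: mexp_def)
  have d: "dim_row (mexp (complex_of_real t \<cdot>\<^sub>m A)) = N" "dim_col (mexp (complex_of_real t \<cdot>\<^sub>m A)) = N"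
  proof -
    have "complex_of_real t \<cdot>\<^sub>m A \<in> carrier_mat N N" using A by simp
    from mexp_carrier[OF this] show "dim_row (mexp (complex_of_real t \<cdot>\<^sub>m A)) = N" "dim_col (mexp (complex_of_real t \<cdot>\<^sub>m A)) = N"
      by auto
  qed
  have "mat_adjoint (mexp (complex_of_real t \<cdot>\<^sub>m A)) $$ (i,j) = cnj (mexp (complex_of_real t \<cdot>\<^sub>m A) $$ (j,i))"
    using d ij by simp
  also have "\<dots> = cnj (\<Sum>k. exp_series_term (complex_of_real t) A j i k)"
    by (simp add: mexp_smult_index[OF A ij(2,1)])
  also have "\<dots> = (\<Sum>k. cnj (exp_series_term (complex_of_real t) A j i k))"
  proof -
    have S: "summable (exp_series_term (complex_of_real t) A j i)"
      by (rule summable_norm_cancel, rule exp_series_term_summable[OF A ij(2,1)])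
    have "(\<lambda>k. cnj (exp_series_term (complex_of_real t) A j i k)) sums cnj (\<Sum>k. exp_series_term (complex_of_real t) A j i k)"
      unfolding sums_cnj by (rule summable_sums[OF S])
    thus ?thesis by (rule sums_unique)
  qed
  also have "\<dots> = (\<Sum>k. exp_series_term (complex_of_real t) A i j k)"
  proof (rule arg_cong[of _ _ suminf], rule ext)
    fix k
    have "cnj ((A ^\<^sub>m k) $$ (j,i)) = mat_adjoint (A ^\<^sub>m k) $$ (i,j)" using A ij by simp
    also have "\<dots> = (A ^\<^sub>m k) $$ (i,j)" by (simp add: mat_adjoint_pow_hermitian[OF A h])
    finally show "cnj (exp_series_term (complex_of_real t) A j i k) = exp_series_term (complex_of_real t) A i j k"
      by (simp add: exp_series_term_def)
  qed
  finally show "mat_adjoint (mexp (complex_of_real t \<cdot>\<^sub>m A)) $$ (i,j) = mexp (complex_of_real t \<cdot>\<^sub>m A) $$ (i,j)"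
    by (simp add: mexp_smult_index[OF A ij])
qed (insert A, auto simp: mexp_def)

lemma mexp_nonzero: assumes A: "A \<in> carrier_mat N N" and N: "N > 0"
  shows "mexp (a \<cdot>\<^sub>m A) \<noteq> 0\<^sub>m N N"
proof
  assume z: "mexp (a \<cdot>\<^sub>m A) = 0\<^sub>m N N"
  have "mexp (a \<cdot>\<^sub>m A) * mexp ((- a) \<cdot>\<^sub>m A) = 1\<^sub>m N" by (rule mexp_inverse[OF A])
  moreover have "mexp ((- a) \<cdot>\<^sub>m A) \<in> carrier_mat N N" using A by simp
  ultimately have "(1\<^sub>m N :: complex mat) = 0\<^sub>m N N" using z by simp
  from arg_cong[OF this, of "\<lambda>A. A $$ (0,0)"] N show False by simp
qed

definition gibbs_root :: "complex mat \<Rightarrow> real \<Rightarrow> real \<Rightarrow> complex mat" where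
  "gibbs_root H b s = complex_of_real (sqrt (1 / (Re (mtrace (mexp ((- complex_of_real b) \<cdot>\<^sub>m H)))) powr s))
     \<cdot>\<^sub>m mexp (complex_of_real (- (s * b) / 2) \<cdot>\<^sub>m H)"

context
  fixes H :: "complex mat" and d :: nat
  assumes H: "H \<in> carrier_mat d d" and herm: "mat_adjoint H = H" and d: "d > 0"
begin

private definition E :: "real \<Rightarrow> complex mat" where "E t = mexp (complex_of_real t \<cdot>\<^sub>m H)"

private lemma E_carrier: "E t \<in> carrier_mat d d"
  using H by (simp add: E_def)

private lemma E_add: "E x * E y = E (x + y)"
  unfolding E_def using mexp_add[OF H] by (simp add: of_real_add)

private lemma E_zero: "E 0 = 1\<^sub>m d"
  unfolding E_def using mexp_zero[OF H] by simp

private lemma E_hermitian: "mat_adjoint (E t) = E t"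
  unfolding E_def by (rule mexp_hermitian[OF H herm])

private lemma E_nonzero: "E t \<noteq> 0\<^sub>m d d"
  unfolding E_def by (rule mexp_nonzero[OF H d])

private lemma gibbs_partition_eq: "mexp ((- complex_of_real b) \<cdot>\<^sub>m H) = E (- b)"
  by (simp add: E_def)

private lemma gibbs_root_eq:
  "gibbs_root H b s = complex_of_real (sqrt (1 / (Re (mtrace (E (- b)))) powr s)) \<cdot>\<^sub>m E (- (s * b) / 2)"
  by (simp add: gibbs_root_def E_def)

lemma gibbs_partition_nonzero: "Re (mtrace (mexp ((- complex_of_real b) \<cdot>\<^sub>m H))) \<noteq> 0"
proof -
  have "hs_inner d (E (- b / 2)) (E (- b / 2)) \<noteq> 0"
    using hs_inner_self_eq_0_iff[OF E_carrier] E_nonzero by simp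
  hence nz: "(\<Sum>i<d. \<Sum>j<d. (cmod (E (- b / 2) $$ (i,j)))\<^sup>2) \<noteq> 0"
    by (simp only: hs_inner_self of_real_eq_0_iff not_False_eq_True)
  have "E (- b) = E (- b / 2) * mat_adjoint (E (- b / 2))" by (simp add: E_hermitian E_add)
  hence "mtrace (E (- b)) = complex_of_real (\<Sum>i<d. \<Sum>j<d. (cmod (E (- b / 2) $$ (i,j)))\<^sup>2)"
    by (simp only: mtrace_mult_adjoint[OF E_carrier] hs_inner_self)
  hence "Re (mtrace (E (- b))) = (\<Sum>i<d. \<Sum>j<d. (cmod (E (- b / 2) $$ (i,j)))\<^sup>2)"
    by (simp only: Re_complex_of_real)
  with nz show ?thesis unfolding gibbs_partition_eq by simp
qed

lemma gibbs_root_carrier: "gibbs_root H b s \<in> carrier_mat d d"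
  by (simp add: gibbs_root_eq E_carrier)

lemma gibbs_root_hermitian: "mat_adjoint (gibbs_root H b s) = gibbs_root H b s"
  by (simp add: gibbs_root_eq mat_adjoint_smult E_hermitian)

lemma gibbs_pow_eq_gibbs_root_square: "gibbs_pow H b s = gibbs_root H b s * gibbs_root H b s"
proof -
  let ?c = "1 / (Re (mtrace (E (- b)))) powr s"
  have "?c \<ge> 0" by simp
  hence c: "complex_of_real (sqrt ?c) * complex_of_real (sqrt ?c) = complex_of_real ?c"
    by (simp flip: of_real_mult)
  have "gibbs_pow H b s = complex_of_real ?c \<cdot>\<^sub>m E (- (s * b))"
    by (simp only: gibbs_pow_def gibbs_partition_eq)
  also have "\<dots> = gibbs_root H b s * gibbs_root H b s"
    unfolding gibbs_root_eq smult_mult_smult[OF E_carrier E_carrier] E_add c by (simp add: mult.commute)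
  finally show ?thesis .
qed

lemma gibbs_root_invertible:
  "\<exists>Q'\<in>carrier_mat d d. gibbs_root H b s * Q' = 1\<^sub>m d \<and> Q' * gibbs_root H b s = 1\<^sub>m d"
proof -
  let ?r = "sqrt (1 / (Re (mtrace (E (- b)))) powr s)"
  let ?u = "- (s * b) / 2"
  have r: "complex_of_real ?r * complex_of_real (1 / ?r) = 1" "complex_of_real (1 / ?r) * complex_of_real ?r = 1"
    using gibbs_partition_nonzero[of b] unfolding gibbs_partition_eq by (simp_all flip: of_real_mult)
  define Q' where "Q' = complex_of_real (1 / ?r) \<cdot>\<^sub>m E (- ?u)"
  have "gibbs_root H b s * Q' = 1\<^sub>m d" "Q' * gibbs_root H b s = 1\<^sub>m d"
    unfolding gibbs_root_eq Q'_def smult_mult_smult[OF E_carrier E_carrier] E_add r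
    by (simp_all add: E_zero one_smult_mat)
  moreover have "Q' \<in> carrier_mat d d" unfolding Q'_def using E_carrier by simp
  ultimately show ?thesis by blast
qed

end

section \<open>Partial traces over the environment\<close>

lemma eq_mat_blockI:
  assumes A: "A \<in> carrier_mat (n * d) (n * d)" and B: "B \<in> carrier_mat (n * d) (n * d)"
    and eq: "\<And>i k j l. i < n \<Longrightarrow> k < d \<Longrightarrow> j < n \<Longrightarrow> l < d \<Longrightarrow>
      A $$ (i * d + k, j * d + l) = B $$ (i * d + k, j * d + l)"
  shows "A = B"
proof (rule eq_matI)
  fix p r assume "p < dim_row B" "r < dim_col B"
  hence p: "p < n * d" and r: "r < n * d" using B by auto
  from eq[OF index_decompose[OF p] index_decompose[OF r]]
  show "A $$ (p,r) = B $$ (p,r)" by simp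
qed (use A B in auto)

lemma kron_carrier[simp]:
  "A \<in> carrier_mat n n \<Longrightarrow> B \<in> carrier_mat d d \<Longrightarrow> kron A B \<in> carrier_mat (n * d) (n * d)"
  by (simp add: kron_def carrier_matD)

lemma index_kron:
  assumes "A \<in> carrier_mat n n" "B \<in> carrier_mat d d" "i < n" "k < d" "j < n" "l < d"
  shows "kron A B $$ (i * d + k, j * d + l) = A $$ (i,j) * B $$ (k,l)"
  using assms index_compose[of i n k d] index_compose[of j n l d] by (simp add: kron_def)

lemma index_mult_mat_blocks:
  assumes Y: "Y \<in> carrier_mat (n * d) (n * d)" and Z: "Z \<in> carrier_mat (n * d) (n * d)"
    and "i < n" "k < d" "j < n" "l < d"
  shows "(Y * Z) $$ (i * d + k, j * d + l)
    = (\<Sum>i'<n. \<Sum>k'<d. Y $$ (i * d + k, i' * d + k') * Z $$ (i' * d + k', j * d + l))"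
  using index_compose(1)[of i n k d] index_compose(1)[of j n l d] assms
  by (simp del: index_mult_mat(1) add: index_mult_mat_sum[OF Y Z] sum_lessThan_mult)

lemma index_kron_one_mult:
  assumes A: "A \<in> carrier_mat d d" and Y: "Y \<in> carrier_mat (n * d) (n * d)"
    and ik: "i < n" "k < d" "j < n" "l < d"
  shows "(kron (1\<^sub>m n) A * Y) $$ (i * d + k, j * d + l) = (\<Sum>k'<d. A $$ (k,k') * Y $$ (i * d + k', j * d + l))"
proof -
  have "(kron (1\<^sub>m n) A * Y) $$ (i * d + k, j * d + l)
      = (\<Sum>i'<n. \<Sum>k'<d. kron (1\<^sub>m n) A $$ (i * d + k, i' * d + k') * Y $$ (i' * d + k', j * d + l))"
    by (rule index_mult_mat_blocks[OF kron_carrier[OF one_carrier_mat A] Y ik])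
  also have "\<dots> = (\<Sum>i'<n. if i' = i then \<Sum>k'<d. A $$ (k,k') * Y $$ (i' * d + k', j * d + l) else 0)"
    using ik by (intro sum.cong refl) (auto simp: index_kron[OF one_carrier_mat A])
  also have "\<dots> = (\<Sum>k'<d. A $$ (k,k') * Y $$ (i * d + k', j * d + l))" using ik by simp
  finally show ?thesis .
qed

lemma index_mult_kron_one:
  assumes A: "A \<in> carrier_mat d d" and Y: "Y \<in> carrier_mat (n * d) (n * d)"
    and ik: "i < n" "k < d" "j < n" "l < d"
  shows "(Y * kron (1\<^sub>m n) A) $$ (i * d + k, j * d + l) = (\<Sum>l'<d. Y $$ (i * d + k, j * d + l') * A $$ (l',l))"
proof -
  have "(Y * kron (1\<^sub>m n) A) $$ (i * d + k, j * d + l)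
      = (\<Sum>j'<n. \<Sum>l'<d. Y $$ (i * d + k, j' * d + l') * kron (1\<^sub>m n) A $$ (j' * d + l', j * d + l))"
    by (rule index_mult_mat_blocks[OF Y kron_carrier[OF one_carrier_mat A] ik])
  also have "\<dots> = (\<Sum>j'<n. if j' = j then \<Sum>l'<d. Y $$ (i * d + k, j' * d + l') * A $$ (l',l) else 0)"
    using ik by (intro sum.cong refl) (auto simp: index_kron[OF one_carrier_mat A])
  also have "\<dots> = (\<Sum>l'<d. Y $$ (i * d + k, j * d + l') * A $$ (l',l))" using ik by simp
  finally show ?thesis .
qed

lemma index_mult_kron_right_one:
  assumes X: "X \<in> carrier_mat n n" and Y: "Y \<in> carrier_mat (n * d) (n * d)"
    and ik: "i < n" "k < d" "j < n" "l < d"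
  shows "(Y * kron X (1\<^sub>m d)) $$ (i * d + k, j * d + l) = (\<Sum>i'<n. Y $$ (i * d + k, i' * d + l) * X $$ (i',j))"
proof -
  have "(Y * kron X (1\<^sub>m d)) $$ (i * d + k, j * d + l)
      = (\<Sum>i'<n. \<Sum>k'<d. Y $$ (i * d + k, i' * d + k') * kron X (1\<^sub>m d) $$ (i' * d + k', j * d + l))"
    by (rule index_mult_mat_blocks[OF Y kron_carrier[OF X one_carrier_mat] ik])
  also have "\<dots> = (\<Sum>i'<n. \<Sum>k'<d. if k' = l then Y $$ (i * d + k, i' * d + k') * X $$ (i',j) else 0)"
    using ik by (intro sum.cong refl) (auto simp: index_kron[OF X one_carrier_mat])
  also have "\<dots> = (\<Sum>i'<n. Y $$ (i * d + k, i' * d + l) * X $$ (i',j))" using ik by simp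
  finally show ?thesis .
qed

lemma kron_mult:
  assumes A: "A \<in> carrier_mat n n" and C: "C \<in> carrier_mat n n"
    and B: "B \<in> carrier_mat d d" and D: "D \<in> carrier_mat d d"
  shows "kron A B * kron C D = kron (A * C) (B * D)"
proof -
  have AB: "kron A B \<in> carrier_mat (n * d) (n * d)" and CD: "kron C D \<in> carrier_mat (n * d) (n * d)"
    and AC: "A * C \<in> carrier_mat n n" and BD: "B * D \<in> carrier_mat d d"
    using assms by simp_all
  show ?thesis
  proof (rule eq_mat_blockI[OF mult_carrier_mat[OF AB CD] kron_carrier[OF AC BD]])
    fix i k j l assume ik: "i < n" "k < d" "j < n" "l < d"
    have "(kron A B * kron C D) $$ (i * d + k, j * d + l)
        = (\<Sum>i'<n. \<Sum>k'<d. kron A B $$ (i * d + k, i' * d + k') * kron C D $$ (i' * d + k', j * d + l))"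
      by (rule index_mult_mat_blocks[OF AB CD ik])
    also have "\<dots> = (\<Sum>i'<n. \<Sum>k'<d. A $$ (i,i') * B $$ (k,k') * (C $$ (i',j) * D $$ (k',l)))"
      using ik by (intro sum.cong refl) (simp add: index_kron[OF A B] index_kron[OF C D])
    also have "\<dots> = (\<Sum>i'<n. A $$ (i,i') * C $$ (i',j)) * (\<Sum>k'<d. B $$ (k,k') * D $$ (k',l))"
      by (simp add: sum_product mult_ac)
    also have "\<dots> = kron (A * C) (B * D) $$ (i * d + k, j * d + l)"
      using ik by (simp del: index_mult_mat(1) add: index_kron[OF AC BD] index_mult_mat_sum[OF A C]
          index_mult_mat_sum[OF B D])
    finally show "(kron A B * kron C D) $$ (i * d + k, j * d + l) = kron (A * C) (B * D) $$ (i * d + k, j * d + l)" .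
  qed
qed

lemma mat_adjoint_kron:
  assumes A: "A \<in> carrier_mat n n" and B: "B \<in> carrier_mat d d"
  shows "mat_adjoint (kron A B) = kron (mat_adjoint A) (mat_adjoint B)"
proof (rule eq_mat_blockI[OF mat_adjoint_carrier[OF kron_carrier[OF A B]]
      kron_carrier[OF mat_adjoint_carrier[OF A] mat_adjoint_carrier[OF B]]])
  fix i k j l assume ik: "i < n" "k < d" "j < n" "l < d"
  thus "mat_adjoint (kron A B) $$ (i * d + k, j * d + l) = kron (mat_adjoint A) (mat_adjoint B) $$ (i * d + k, j * d + l)"
    using A B index_compose(1)[of i n k d] index_compose(1)[of j n l d]
    by (simp add: index_kron[OF A B] index_kron[OF mat_adjoint_carrier[OF A] mat_adjoint_carrier[OF B]]
        carrier_matD[OF kron_carrier[OF A B]])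
qed

lemma kron_one_one: "kron (1\<^sub>m n) (1\<^sub>m d) = (1\<^sub>m (n * d) :: complex mat)"
proof (rule eq_mat_blockI[OF kron_carrier[OF one_carrier_mat one_carrier_mat] one_carrier_mat])
  fix i k j l assume ik: "i < n" "k < d" "j < n" "l < d"
  have "i * d + k = j * d + l \<longleftrightarrow> i = j \<and> k = l"
    using index_compose(2,3)[of i n k d] index_compose(2,3)[of j n l d] ik by metis
  thus "kron (1\<^sub>m n) (1\<^sub>m d) $$ (i * d + k, j * d + l) = 1\<^sub>m (n * d) $$ (i * d + k, j * d + l)"
    using ik index_compose(1)[of i n k d] index_compose(1)[of j n l d]
    by (simp add: index_kron[OF one_carrier_mat one_carrier_mat])
qed

lemma kron_one_sandwich:
  assumes X: "X \<in> carrier_mat n n" and Q: "Q \<in> carrier_mat d d" and herm: "mat_adjoint Q = Q"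
  shows "kron X (Q * Q) = kron (1\<^sub>m n) Q * kron X (1\<^sub>m d) * mat_adjoint (kron (1\<^sub>m n) Q)"
proof -
  have "mat_adjoint (kron (1\<^sub>m n) Q) = kron (1\<^sub>m n) Q" by (simp add: mat_adjoint_kron[OF one_carrier_mat Q] herm)
  moreover have "kron (1\<^sub>m n) Q * kron X (1\<^sub>m d) = kron X Q"
    using kron_mult[OF one_carrier_mat X Q one_carrier_mat] X Q by simp
  moreover have "kron X Q * kron (1\<^sub>m n) Q = kron X (Q * Q)"
    using kron_mult[OF X one_carrier_mat Q Q] X by simp
  ultimately show ?thesis by simp
qed

lemma index_ptrace2: "i < n \<Longrightarrow> j < n \<Longrightarrow> ptrace2 n d A $$ (i,j) = (\<Sum>k<d. A $$ (i * d + k, j * d + k))"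
  by (simp add: ptrace2_def)

lemma ptrace2_kron_one_mult_commute:
  assumes A: "A \<in> carrier_mat d d" and Y: "Y \<in> carrier_mat (n * d) (n * d)"
  shows "ptrace2 n d (kron (1\<^sub>m n) A * Y) = ptrace2 n d (Y * kron (1\<^sub>m n) A)"
proof (rule eq_matI)
  fix i j assume "i < dim_row (ptrace2 n d (Y * kron (1\<^sub>m n) A))" "j < dim_col (ptrace2 n d (Y * kron (1\<^sub>m n) A))"
  hence ij: "i < n" "j < n" by (simp_all add: ptrace2_def)
  have "ptrace2 n d (kron (1\<^sub>m n) A * Y) $$ (i,j) = (\<Sum>k<d. \<Sum>k'<d. A $$ (k,k') * Y $$ (i * d + k', j * d + k))"
    using ij by (simp add: index_ptrace2) (intro sum.cong refl, simp add: index_kron_one_mult[OF A Y])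
  also have "\<dots> = (\<Sum>k'<d. \<Sum>k<d. Y $$ (i * d + k', j * d + k) * A $$ (k,k'))"
    by (subst sum.swap) (simp add: mult.commute)
  also have "\<dots> = ptrace2 n d (Y * kron (1\<^sub>m n) A) $$ (i,j)"
    using ij by (simp add: index_ptrace2) (intro sum.cong refl, simp add: index_mult_kron_one[OF A Y])
  finally show "ptrace2 n d (kron (1\<^sub>m n) A * Y) $$ (i,j) = ptrace2 n d (Y * kron (1\<^sub>m n) A) $$ (i,j)" .
qed (simp_all add: ptrace2_def)

text \<open>partial_entry n d W (k,l) is the operator (Id \<otimes> <k|) W (Id \<otimes> |l>) on H_S.\<close>

definition partial_entry :: "nat \<Rightarrow> nat \<Rightarrow> complex mat \<Rightarrow> nat \<times> nat \<Rightarrow> complex mat" where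
  "partial_entry n d W q = mat n n (\<lambda>(i,j). W $$ (i * d + fst q, j * d + snd q))"

lemma partial_entry_carrier[simp]:
  "partial_entry n d W q \<in> carrier_mat n n"
  "dim_row (partial_entry n d W q) = n" "dim_col (partial_entry n d W q) = n"
  by (simp_all add: partial_entry_def)

lemma index_partial_entry[simp]:
  "i < n \<Longrightarrow> j < n \<Longrightarrow> partial_entry n d W q $$ (i,j) = W $$ (i * d + fst q, j * d + snd q)"
  by (simp add: partial_entry_def)

lemma index_sandwich_kron_one:
  assumes W: "W \<in> carrier_mat (n * d) (n * d)" and X: "X \<in> carrier_mat n n"
    and ik: "i < n" "j < n" "k < d"
  shows "(W * kron X (1\<^sub>m d) * mat_adjoint W) $$ (i * d + k, j * d + k)
    = (\<Sum>c<d. \<Sum>i'<n. \<Sum>j'<n. W $$ (i * d + k, i' * d + c) * X $$ (i',j') * cnj (W $$ (j * d + k, j' * d + c)))"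
proof -
  have WK: "W * kron X (1\<^sub>m d) \<in> carrier_mat (n * d) (n * d)" using W X by simp
  have "(W * kron X (1\<^sub>m d) * mat_adjoint W) $$ (i * d + k, j * d + k)
      = (\<Sum>i'<n. \<Sum>c<d. (W * kron X (1\<^sub>m d)) $$ (i * d + k, i' * d + c) * mat_adjoint W $$ (i' * d + c, j * d + k))"
    by (rule index_mult_mat_blocks[OF WK mat_adjoint_carrier[OF W]]) (use ik in simp_all)
  also have "\<dots> = (\<Sum>i'<n. \<Sum>c<d. \<Sum>j'<n. W $$ (i * d + k, j' * d + c) * X $$ (j',i') * cnj (W $$ (j * d + k, i' * d + c)))"
    using W ik
    by (intro sum.cong refl) (simp add: index_mult_kron_right_one[OF X W] sum_distrib_right index_compose)
  also have "\<dots> = (\<Sum>c<d. \<Sum>j'<n. \<Sum>i'<n. W $$ (i * d + k, j' * d + c) * X $$ (j',i') * cnj (W $$ (j * d + k, i' * d + c)))"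
    by (subst sum.swap, rule sum.cong[OF refl], rule sum.swap)
  finally show ?thesis .
qed

lemma kraus_rep_ptrace2:
  assumes W: "W \<in> carrier_mat (n * d) (n * d)"
  shows "kraus_rep n (\<lambda>X. ptrace2 n d (W * kron X (1\<^sub>m d) * mat_adjoint W))
    (partial_entry n d W) ({..<d} \<times> {..<d})"
  unfolding kraus_rep_def
proof (intro conjI ballI)
  fix X :: "complex mat" assume X: "X \<in> carrier_mat n n"
  let ?w = "\<lambda>i k i' c. W $$ (i * d + k, i' * d + c)"
  show "ptrace2 n d (W * kron X (1\<^sub>m d) * mat_adjoint W)
    = msum n (\<lambda>q. partial_entry n d W q * X * mat_adjoint (partial_entry n d W q)) ({..<d} \<times> {..<d})"
  proof (rule eq_matI)
    fix i j assume "i < dim_row (msum n (\<lambda>q. partial_entry n d W q * X * mat_adjoint (partial_entry n d W q)) ({..<d} \<times> {..<d}))"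
      "j < dim_col (msum n (\<lambda>q. partial_entry n d W q * X * mat_adjoint (partial_entry n d W q)) ({..<d} \<times> {..<d}))"
    hence ij: "i < n" "j < n" by simp_all
    have "ptrace2 n d (W * kron X (1\<^sub>m d) * mat_adjoint W) $$ (i,j)
        = (\<Sum>k<d. \<Sum>c<d. \<Sum>i'<n. \<Sum>j'<n. ?w i k i' c * X $$ (i',j') * cnj (?w j k j' c))"
      using ij by (simp add: index_ptrace2 index_sandwich_kron_one[OF W X])
    also have "\<dots> = (\<Sum>k<d. \<Sum>c<d. (partial_entry n d W (k,c) * X * mat_adjoint (partial_entry n d W (k,c))) $$ (i,j))"
      using ij by (intro sum.cong refl)
        (simp del: index_mult_mat(1) add: index_mult_mat3[OF partial_entry_carrier(1) X
          mat_adjoint_carrier[OF partial_entry_carrier(1)] ij])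
    also have "\<dots> = msum n (\<lambda>q. partial_entry n d W q * X * mat_adjoint (partial_entry n d W q)) ({..<d} \<times> {..<d}) $$ (i,j)"
      using ij by (simp add: sum.cartesian_product')
    finally show "ptrace2 n d (W * kron X (1\<^sub>m d) * mat_adjoint W) $$ (i,j) = \<dots>" .
  qed (simp_all add: ptrace2_def)
qed simp_all

lemma partial_entry_kron_one_sandwich:
  assumes A: "A \<in> carrier_mat d d" and B: "B \<in> carrier_mat d d" and W: "W \<in> carrier_mat (n * d) (n * d)"
    and q: "fst q < d" "snd q < d"
  shows "partial_entry n d (kron (1\<^sub>m n) A * W * kron (1\<^sub>m n) B) q
    = mat_lincomb n (\<lambda>p. A $$ (fst q, fst p) * B $$ (snd p, snd q)) (partial_entry n d W) ({..<d} \<times> {..<d})"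
proof (rule eq_matI)
  fix i j assume "i < dim_row (mat_lincomb n (\<lambda>p. A $$ (fst q, fst p) * B $$ (snd p, snd q)) (partial_entry n d W) ({..<d} \<times> {..<d}))"
    "j < dim_col (mat_lincomb n (\<lambda>p. A $$ (fst q, fst p) * B $$ (snd p, snd q)) (partial_entry n d W) ({..<d} \<times> {..<d}))"
  hence ij: "i < n" "j < n" by simp_all
  have AW: "kron (1\<^sub>m n) A * W \<in> carrier_mat (n * d) (n * d)"
    by (rule mult_carrier_mat[OF kron_carrier[OF one_carrier_mat A] W])
  have "(kron (1\<^sub>m n) A * W * kron (1\<^sub>m n) B) $$ (i * d + fst q, j * d + snd q)
      = (\<Sum>l'<d. (kron (1\<^sub>m n) A * W) $$ (i * d + fst q, j * d + l') * B $$ (l', snd q))"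
    by (rule index_mult_kron_one[OF B AW ij(1) q(1) ij(2) q(2)])
  also have "\<dots> = (\<Sum>l'<d. \<Sum>k'<d. A $$ (fst q, k') * W $$ (i * d + k', j * d + l') * B $$ (l', snd q))"
    using ij q by (intro sum.cong refl) (simp add: index_kron_one_mult[OF A W] sum_distrib_right)
  also have "\<dots> = (\<Sum>k'<d. \<Sum>l'<d. A $$ (fst q, k') * B $$ (l', snd q) * W $$ (i * d + k', j * d + l'))"
    by (subst sum.swap) (simp add: mult_ac)
  finally show "partial_entry n d (kron (1\<^sub>m n) A * W * kron (1\<^sub>m n) B) q $$ (i,j)
      = mat_lincomb n (\<lambda>p. A $$ (fst q, fst p) * B $$ (snd p, snd q)) (partial_entry n d W) ({..<d} \<times> {..<d}) $$ (i,j)"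
    using ij by (simp add: sum.cartesian_product')
qed simp_all

lemma partial_entry_kron_one_sandwich_mat_span:
  assumes "A \<in> carrier_mat d d" "B \<in> carrier_mat d d" "W \<in> carrier_mat (n * d) (n * d)" "q \<in> {..<d} \<times> {..<d}"
  shows "partial_entry n d (kron (1\<^sub>m n) A * W * kron (1\<^sub>m n) B) q \<in> mat_span n (partial_entry n d W) ({..<d} \<times> {..<d})"
  using assms by (auto simp: partial_entry_kron_one_sandwich intro: mat_spanI)

lemma partial_entry_adjoint:
  assumes "W \<in> carrier_mat (n * d) (n * d)" "k < d" "l < d"
  shows "partial_entry n d (mat_adjoint W) (k,l) = mat_adjoint (partial_entry n d W (l,k))"
  using assms by (intro eq_matI) (simp_all add: index_compose)

lemma partial_entry_nonzero:
  assumes W: "W \<in> carrier_mat (n * d) (n * d)" and nz: "W \<noteq> 0\<^sub>m (n * d) (n * d)"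
  shows "\<exists>q \<in> {..<d} \<times> {..<d}. partial_entry n d W q \<noteq> 0\<^sub>m n n"
proof (rule ccontr)
  assume "\<not> ?thesis"
  hence z: "partial_entry n d W (k,l) = 0\<^sub>m n n" if "k < d" "l < d" for k l using that by auto
  have "W $$ (i * d + k, j * d + l) = 0\<^sub>m (n * d) (n * d) $$ (i * d + k, j * d + l)"
    if "i < n" "k < d" "j < n" "l < d" for i k j l
  proof -
    have "W $$ (i * d + k, j * d + l) = partial_entry n d W (k,l) $$ (i,j)" using that by simp
    also have "\<dots> = 0" using that by (simp add: z)
    finally show ?thesis using that index_compose(1)[of i n k d] index_compose(1)[of j n l d] by simp
  qed
  hence "W = 0\<^sub>m (n * d) (n * d)" by (intro eq_mat_blockI[OF W zero_carrier_mat])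
  with nz show False ..
qed

section \<open>Primitivity of the deformed maps\<close>

lemma kraus_rep_transfer_map:
  "(\<And>X. X \<in> carrier_mat n n \<Longrightarrow> L X = K X) \<Longrightarrow> kraus_rep n K f S \<Longrightarrow> kraus_rep n L f S"
  by (simp add: kraus_rep_def)

lemma primitive_cp_transfer:
  assumes L: "primitive_cp n L" and f: "kraus_rep n L f S" and fg: "\<And>x. x \<in> S \<Longrightarrow> f x \<in> mat_span n g T"
    and h: "kraus_rep n L' h R" and gh: "\<And>y. y \<in> T \<Longrightarrow> mat_adjoint (g y) \<in> mat_span n h R"
    and T: "finite T" and cg: "\<And>y. y \<in> T \<Longrightarrow> g y \<in> carrier_mat n n"
  shows "\<exists>m. word_spanning n h R m"
proof -
  obtain Ks m where Ks: "kraus_rep n L (\<lambda>i. Ks ! i) {..<length Ks}"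
    and sp: "word_spanning n (\<lambda>i. Ks ! i) {..<length Ks} m"
    using L unfolding primitive_cp_iff_kraus_rep by blast
  have "Ks ! i \<in> mat_span n g T" if "i \<in> {..<length Ks}" for i
    by (rule mat_span_trans[OF kraus_repD(1)[OF f] T fg kraus_rep_mat_span[OF Ks f that]])
  hence "word_spanning n g T m" by (intro word_spanning_mono[OF _ T _ cg sp]) simp_all
  with T cg have "word_spanning n (\<lambda>y. mat_adjoint (g y)) T m" by (rule word_spanning_adjoint)
  with T kraus_repD(1)[OF h] gh kraus_repD(2)[OF h] have "word_spanning n h R m" by (rule word_spanning_mono)
  thus ?thesis ..
qed

lemma Uint_carrier:
  assumes "self_adjoint dS HS" "self_adjoint d HE" "self_adjoint (dS * d) V"
  shows "Uint dS d HS HE V t \<in> carrier_mat (dS * d) (dS * d)"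
  using assms unfolding Uint_def self_adjoint_def by (intro mexp_carrier) simp

lemma Uint_nonzero:
  assumes "self_adjoint dS HS" "self_adjoint d HE" "self_adjoint (dS * d) V" "dS > 0" "d > 0"
  shows "Uint dS d HS HE V t \<noteq> 0\<^sub>m (dS * d) (dS * d)"
  using assms unfolding Uint_def self_adjoint_def by (intro mexp_nonzero) simp_all

locale repeated_interaction =
  fixes M dS :: nat and dE :: "nat \<Rightarrow> nat" and HS :: "complex mat" and HE V :: "nat \<Rightarrow> complex mat"
    and \<tau> :: "nat \<Rightarrow> real" and \<beta> :: real
  assumes M: "M \<ge> 1" and dS: "dS > 0" and dE: "\<And>j. j < M \<Longrightarrow> dE j > 0"
    and HS: "self_adjoint dS HS" and HE: "\<And>j. j < M \<Longrightarrow> self_adjoint (dE j) (HE j)"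
    and V: "\<And>j. j < M \<Longrightarrow> self_adjoint (dS * dE j) (V j)"
begin

abbreviation U :: "nat \<Rightarrow> complex mat" where "U j \<equiv> Uint dS (dE j) HS (HE j) (V j) (\<tau> j)"

abbreviation env_pairs :: "nat \<Rightarrow> (nat \<times> nat) set" where "env_pairs j \<equiv> {..<dE j} \<times> {..<dE j}"

abbreviation U_entry :: "nat \<Rightarrow> nat \<times> nat \<Rightarrow> complex mat" where "U_entry j \<equiv> partial_entry dS (dE j) (U j)"

abbreviation root :: "(nat \<Rightarrow> real) \<Rightarrow> nat \<Rightarrow> real \<Rightarrow> complex mat" where
  "root \<zeta> j s \<equiv> gibbs_root (HE j) (\<beta> - \<zeta> j) s"

text \<open>With gibbs_pow = R * R for the Hermitian root R = gibbs_root, L_j has the Kraus operators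
  (Id \<otimes> <k|) U_j (Id \<otimes> R_1) (Id \<otimes> |l>), and L_j^[alpha]* has the Kraus operators
  (Id \<otimes> <k|) (Id \<otimes> R_(1-alpha_j)) U_j^* (Id \<otimes> R_alpha_j) (Id \<otimes> |l>).\<close>

definition kraus_L :: "(nat \<Rightarrow> real) \<Rightarrow> nat \<Rightarrow> nat \<times> nat \<Rightarrow> complex mat" where
  "kraus_L \<zeta> j = partial_entry dS (dE j) (U j * kron (1\<^sub>m dS) (root \<zeta> j 1))"

definition kraus_L_deformed :: "(nat \<Rightarrow> real) \<Rightarrow> (nat \<Rightarrow> real) \<Rightarrow> nat \<Rightarrow> nat \<times> nat \<Rightarrow> complex mat" where
  "kraus_L_deformed \<zeta> \<alpha> j = partial_entry dS (dE j)
     (kron (1\<^sub>m dS) (root \<zeta> j (1 - \<alpha> j)) * mat_adjoint (U j) * kron (1\<^sub>m dS) (root \<zeta> j (\<alpha> j)))"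

lemma U_carrier: "j < M \<Longrightarrow> U j \<in> carrier_mat (dS * dE j) (dS * dE j)"
  using HS HE V by (intro Uint_carrier)

lemma HE_carrier: "j < M \<Longrightarrow> HE j \<in> carrier_mat (dE j) (dE j)"
  using HE by (simp add: self_adjoint_def)

lemma HE_hermitian: "j < M \<Longrightarrow> mat_adjoint (HE j) = HE j"
  using HE by (simp add: self_adjoint_def)

lemma root_carrier: "j < M \<Longrightarrow> root \<zeta> j s \<in> carrier_mat (dE j) (dE j)"
  by (rule gibbs_root_carrier[OF HE_carrier HE_hermitian dE])

lemma root_hermitian: "j < M \<Longrightarrow> mat_adjoint (root \<zeta> j s) = root \<zeta> j s"
  by (rule gibbs_root_hermitian[OF HE_carrier HE_hermitian dE])

lemma root_square: "j < M \<Longrightarrow> gibbs_pow (HE j) (\<beta> - \<zeta> j) s = root \<zeta> j s * root \<zeta> j s"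
  by (rule gibbs_pow_eq_gibbs_root_square[OF HE_carrier HE_hermitian dE])

lemma root_invertible:
  "j < M \<Longrightarrow> \<exists>Q'\<in>carrier_mat (dE j) (dE j). root \<zeta> j s * Q' = 1\<^sub>m (dE j) \<and> Q' * root \<zeta> j s = 1\<^sub>m (dE j)"
  by (rule gibbs_root_invertible[OF HE_carrier HE_hermitian dE])

lemma kraus_rep_Lj:
  assumes j: "j < M"
  shows "kraus_rep dS (Lj dS dE HS HE V \<tau> \<beta> \<zeta> j) (kraus_L \<zeta> j) (env_pairs j)"
proof -
  let ?K = "kron (1\<^sub>m dS) (root \<zeta> j 1)"
  have U: "U j \<in> carrier_mat (dS * dE j) (dS * dE j)" and K: "?K \<in> carrier_mat (dS * dE j) (dS * dE j)"
    using U_carrier[OF j] root_carrier[OF j] by simp_all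
  show ?thesis unfolding kraus_L_def
  proof (rule kraus_rep_transfer_map[OF _ kraus_rep_ptrace2[OF mult_carrier_mat[OF U K]]])
    fix X :: "complex mat" assume X: "X \<in> carrier_mat dS dS"
    have Z: "kron X (1\<^sub>m (dE j)) \<in> carrier_mat (dS * dE j) (dS * dE j)" using X by simp
    have "kron X (gibbs (HE j) (\<beta> - \<zeta> j)) = ?K * kron X (1\<^sub>m (dE j)) * mat_adjoint ?K"
      unfolding gibbs_def root_square[OF j] by (rule kron_one_sandwich[OF X root_carrier[OF j] root_hermitian[OF j]])
    thus "Lj dS dE HS HE V \<tau> \<beta> \<zeta> j X
        = ptrace2 dS (dE j) (U j * ?K * kron X (1\<^sub>m (dE j)) * mat_adjoint (U j * ?K))"
      by (simp add: Lj_def Let_def sandwich_mult[OF U K Z])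
  qed
qed

lemma kraus_L_mat_span:
  assumes j: "j < M" and q: "q \<in> env_pairs j"
  shows "kraus_L \<zeta> j q \<in> mat_span dS (U_entry j) (env_pairs j)"
proof -
  have U: "U j \<in> carrier_mat (dS * dE j) (dS * dE j)" by (rule U_carrier[OF j])
  have "U j * kron (1\<^sub>m dS) (root \<zeta> j 1) = kron (1\<^sub>m dS) (1\<^sub>m (dE j)) * U j * kron (1\<^sub>m dS) (root \<zeta> j 1)"
    using U by (simp add: kron_one_one)
  thus ?thesis unfolding kraus_L_def
    using partial_entry_kron_one_sandwich_mat_span[OF one_carrier_mat root_carrier[OF j] U q] by simp
qed

lemma kraus_rep_Ljd:
  assumes j: "j < M"
  shows "kraus_rep dS (Ljd dS dE HS HE V \<tau> \<beta> \<zeta> \<alpha> j) (kraus_L_deformed \<zeta> \<alpha> j) (env_pairs j)"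
proof -
  let ?T = "kron (1\<^sub>m dS) (root \<zeta> j (1 - \<alpha> j))" and ?Q = "kron (1\<^sub>m dS) (root \<zeta> j (\<alpha> j))"
  let ?N = "dS * dE j"
  have U: "mat_adjoint (U j) \<in> carrier_mat ?N ?N" using U_carrier[OF j] by simp
  have T: "?T \<in> carrier_mat ?N ?N" and Q: "?Q \<in> carrier_mat ?N ?N" using root_carrier[OF j] by simp_all
  have Th: "mat_adjoint ?T = ?T"
    by (simp add: mat_adjoint_kron[OF one_carrier_mat root_carrier[OF j]] root_hermitian[OF j])
  have TT: "kron (1\<^sub>m dS) (root \<zeta> j (1 - \<alpha> j) * root \<zeta> j (1 - \<alpha> j)) = ?T * ?T"
    using kron_mult[OF one_carrier_mat one_carrier_mat root_carrier[OF j] root_carrier[OF j]] by simp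
  show ?thesis unfolding kraus_L_deformed_def
  proof (rule kraus_rep_transfer_map[OF _ kraus_rep_ptrace2[OF mult_carrier_mat[OF mult_carrier_mat[OF T U] Q]]])
    fix X :: "complex mat" assume X: "X \<in> carrier_mat dS dS"
    let ?Z = "kron X (1\<^sub>m (dE j))"
    have Z: "?Z \<in> carrier_mat ?N ?N" using X by simp
    let ?Y = "mat_adjoint (U j) * ?Q * ?Z * mat_adjoint (mat_adjoint (U j) * ?Q)"
    have Y: "?Y \<in> carrier_mat ?N ?N" using U Q Z by (meson mat_adjoint_carrier mult_carrier_mat)
    have "mat_adjoint (U j) * kron X (gibbs_pow (HE j) (\<beta> - \<zeta> j) (\<alpha> j)) * U j = ?Y"
      unfolding root_square[OF j] kron_one_sandwich[OF X root_carrier[OF j] root_hermitian[OF j]]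
      using sandwich_mult[OF U Q Z] by simp
    hence "Ljd dS dE HS HE V \<tau> \<beta> \<zeta> \<alpha> j X = ptrace2 dS (dE j) (?T * (?T * ?Y))"
      unfolding Ljd_def Let_def root_square[OF j] TT using T Y by simp
    also have "\<dots> = ptrace2 dS (dE j) (?T * ?Y * mat_adjoint ?T)"
      using ptrace2_kron_one_mult_commute[OF root_carrier[OF j] mult_carrier_mat[OF T Y]] by (simp add: Th)
    also have "\<dots> = ptrace2 dS (dE j) (?T * mat_adjoint (U j) * ?Q * ?Z * mat_adjoint (?T * mat_adjoint (U j) * ?Q))"
      using sandwich_mult[OF T mult_carrier_mat[OF U Q] Z] T U Q by (simp add: assoc_mult_mat[of _ ?N ?N _ ?N _ ?N])
    finally show "Ljd dS dE HS HE V \<tau> \<beta> \<zeta> \<alpha> j X = \<dots>" .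
  qed
qed

lemma adjoint_U_entry_mat_span:
  assumes j: "j < M" and q: "q \<in> env_pairs j"
  shows "mat_adjoint (U_entry j q) \<in> mat_span dS (kraus_L_deformed \<zeta> \<alpha> j) (env_pairs j)"
proof -
  let ?N = "dS * dE j"
  let ?r = "root \<zeta> j (1 - \<alpha> j)" and ?s = "root \<zeta> j (\<alpha> j)"
  obtain r' where r': "r' \<in> carrier_mat (dE j) (dE j)" "r' * ?r = 1\<^sub>m (dE j)" using root_invertible[OF j] by blast
  obtain s' where s': "s' \<in> carrier_mat (dE j) (dE j)" "?s * s' = 1\<^sub>m (dE j)" using root_invertible[OF j] by blast
  have U: "mat_adjoint (U j) \<in> carrier_mat ?N ?N" using U_carrier[OF j] by simp
  have r: "?r \<in> carrier_mat (dE j) (dE j)" and s: "?s \<in> carrier_mat (dE j) (dE j)" using root_carrier[OF j] by simp_all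
  let ?W = "kron (1\<^sub>m dS) ?r * mat_adjoint (U j) * kron (1\<^sub>m dS) ?s"
  have Kr: "kron (1\<^sub>m dS) ?r \<in> carrier_mat ?N ?N" "kron (1\<^sub>m dS) r' \<in> carrier_mat ?N ?N"
    and Ks: "kron (1\<^sub>m dS) ?s \<in> carrier_mat ?N ?N" "kron (1\<^sub>m dS) s' \<in> carrier_mat ?N ?N"
    using r s r'(1) s'(1) by simp_all
  have "kron (1\<^sub>m dS) r' * ?W * kron (1\<^sub>m dS) s'
      = (kron (1\<^sub>m dS) r' * kron (1\<^sub>m dS) ?r) * mat_adjoint (U j) * (kron (1\<^sub>m dS) ?s * kron (1\<^sub>m dS) s')"
    by (rule mult_mat_assoc5[OF Kr(2) Kr(1) U Ks])
  also have "\<dots> = mat_adjoint (U j)"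
    using kron_mult[OF one_carrier_mat one_carrier_mat r'(1) r] kron_mult[OF one_carrier_mat one_carrier_mat s s'(1)] r' s'
    by (simp add: kron_one_one left_mult_one_mat[OF U] right_mult_one_mat[OF U])
  finally have W: "kron (1\<^sub>m dS) r' * ?W * kron (1\<^sub>m dS) s' = mat_adjoint (U j)" .
  obtain k l where kl: "q = (k,l)" "k < dE j" "l < dE j" using q by auto
  have W': "?W \<in> carrier_mat ?N ?N" using Kr(1) U Ks(1) by (meson mult_carrier_mat)
  have "partial_entry dS (dE j) (kron (1\<^sub>m dS) r' * ?W * kron (1\<^sub>m dS) s') (l,k)
      \<in> mat_span dS (partial_entry dS (dE j) ?W) (env_pairs j)"
    using kl by (intro partial_entry_kron_one_sandwich_mat_span[OF r'(1) s'(1) W']) simp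
  hence "partial_entry dS (dE j) (mat_adjoint (U j)) (l,k) \<in> mat_span dS (kraus_L_deformed \<zeta> \<alpha> j) (env_pairs j)"
    unfolding W kraus_L_deformed_def .
  moreover have "mat_adjoint (U_entry j q) = partial_entry dS (dE j) (mat_adjoint (U j)) (l,k)"
    using partial_entry_adjoint[OF U_carrier[OF j] kl(3,2)] kl(1) by simp
  ultimately show ?thesis by simp
qed

lemma U_entry_nonzero: "j < M \<Longrightarrow> \<exists>q\<in>env_pairs j. U_entry j q \<noteq> 0\<^sub>m dS dS"
  using Uint_nonzero[OF HS HE V dS dE] by (intro partial_entry_nonzero U_carrier)

lemma kraus_L_carrier[simp]: "kraus_L \<zeta> j q \<in> carrier_mat dS dS"
  by (simp add: kraus_L_def)

lemma kraus_L_deformed_carrier[simp]: "kraus_L_deformed \<zeta> \<alpha> j q \<in> carrier_mat dS dS"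
  by (simp add: kraus_L_deformed_def)

lemma kraus_rep_cyclic:
  "kraus_rep dS (Lsh Cy M dS dE HS HE V \<tau> \<beta> \<zeta>)
    (pos_word_prod dS (\<lambda>j. kraus_L \<zeta> (M - 1 - j))) (pos_words (\<lambda>j. env_pairs (M - 1 - j)) M)"
proof -
  have "kraus_rep dS (comp_down (\<lambda>j. Lj dS dE HS HE V \<tau> \<beta> \<zeta> (M - 1 - j)) M)
      (pos_word_prod dS (\<lambda>j. kraus_L \<zeta> (M - 1 - j))) (pos_words (\<lambda>j. env_pairs (M - 1 - j)) M)"
    using M by (intro kraus_rep_comp_down kraus_rep_Lj) simp
  thus ?thesis by (simp add: Lsh_def comp_up_eq_comp_down)
qed

lemma kraus_rep_cyclic_deformed:
  "kraus_rep dS (Lshd Cy M dS dE HS HE V \<tau> \<beta> \<zeta> \<alpha>) (pos_word_prod dS (kraus_L_deformed \<zeta> \<alpha>)) (pos_words env_pairs M)"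
  unfolding Lshd_def scheme.case by (intro kraus_rep_comp_down kraus_rep_Ljd)

lemma kraus_rep_random:
  "kraus_rep dS (Lsh Ra M dS dE HS HE V \<tau> \<beta> \<zeta>)
    (\<lambda>p. complex_of_real (1 / sqrt (real M)) \<cdot>\<^sub>m kraus_L \<zeta> (fst p) (snd p)) (Sigma {..<M} env_pairs)"
  unfolding Lsh_def scheme.case by (intro kraus_rep_avg_map[OF M] kraus_rep_Lj)

lemma kraus_rep_random_deformed:
  "kraus_rep dS (Lshd Ra M dS dE HS HE V \<tau> \<beta> \<zeta> \<alpha>)
    (\<lambda>p. complex_of_real (1 / sqrt (real M)) \<cdot>\<^sub>m kraus_L_deformed \<zeta> \<alpha> (fst p) (snd p)) (Sigma {..<M} env_pairs)"
  unfolding Lshd_def scheme.case by (intro kraus_rep_avg_map[OF M] kraus_rep_Ljd)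

lemma U_entry_choice: "\<exists>qf. \<forall>j<M. qf j \<in> env_pairs j \<and> U_entry j (qf j) \<noteq> 0\<^sub>m dS dS"
proof -
  have "\<forall>j. \<exists>q. j < M \<longrightarrow> q \<in> env_pairs j \<and> U_entry j q \<noteq> 0\<^sub>m dS dS" using U_entry_nonzero by blast
  thus ?thesis by (rule choice[THEN exE]) blast
qed

lemma adjoint_words_mat_span_deformed:
  "v \<in> pos_words env_pairs M \<Longrightarrow> pos_word_prod dS (\<lambda>j x. mat_adjoint (U_entry j x)) v
    \<in> mat_span dS (pos_word_prod dS (kraus_L_deformed \<zeta> \<alpha>)) (pos_words env_pairs M)"
  by (rule pos_word_prod_mat_span) (simp_all add: adjoint_U_entry_mat_span)

lemma adjoint_word_nonzero_1_dim:
  assumes dS1: "dS = 1"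
  shows "\<exists>v\<in>pos_words env_pairs M. pos_word_prod dS (\<lambda>j x. mat_adjoint (U_entry j x)) v \<noteq> 0\<^sub>m dS dS"
proof -
  obtain qf where qf: "\<And>j. j < M \<Longrightarrow> qf j \<in> env_pairs j \<and> U_entry j (qf j) \<noteq> 0\<^sub>m dS dS"
    using U_entry_choice by blast
  have "pos_word_prod 1 (\<lambda>j x. mat_adjoint (partial_entry 1 (dE j) (U j) x)) (map qf [0..<M]) \<noteq> 0\<^sub>m 1 1"
  proof (rule pos_word_prod_1_neq_0)
    fix j assume "j < length (map qf [0..<M])"
    hence j: "j < M" by simp
    with qf[OF j] dS1
    show "mat_adjoint (partial_entry 1 (dE j) (U j) (map qf [0..<M] ! j)) \<in> carrier_mat 1 1
        \<and> mat_adjoint (partial_entry 1 (dE j) (U j) (map qf [0..<M] ! j)) \<noteq> 0\<^sub>m 1 1" by simp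
  qed
  moreover have "map qf [0..<M] \<in> pos_words env_pairs M" using qf by (simp add: pos_words_def)
  ultimately show ?thesis using dS1 by auto
qed

lemma primitive_cyclic:
  assumes ER: "primitive_cp dS (Lsh Cy M dS dE HS HE V \<tau> \<beta> \<zeta>0)"
  shows "primitive_cp dS (Lshd Cy M dS dE HS HE V \<tau> \<beta> \<zeta> \<alpha>)
    \<and> map_spectral_radius dS (Lshd Cy M dS dE HS HE V \<tau> \<beta> \<zeta> \<alpha>) > 0"
proof -
  let ?I = "\<lambda>j. env_pairs (M - 1 - j)" and ?g = "pos_word_prod dS (\<lambda>j. U_entry (M - 1 - j))"
  let ?h = "pos_word_prod dS (kraus_L_deformed \<zeta> \<alpha>)"
  have fin: "finite (pos_words ?I M)" by (simp add: finite_pos_words)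
  have cg: "?g w \<in> carrier_mat dS dS" if "w \<in> pos_words ?I M" for w
    by (rule pos_word_prod_carrier_pos_words[OF _ that]) simp
  have fg: "pos_word_prod dS (\<lambda>j. kraus_L \<zeta>0 (M - 1 - j)) w \<in> mat_span dS ?g (pos_words ?I M)"
    if "w \<in> pos_words ?I M" for w
    by (rule pos_word_prod_mat_span[OF _ _ _ that]) (simp_all add: kraus_L_mat_span)
  have gh: "mat_adjoint (?g w) \<in> mat_span dS ?h (pos_words env_pairs M)" if w: "w \<in> pos_words ?I M" for w
  proof -
    have len: "length w = M" using w by (rule length_pos_words)
    have "mat_adjoint (?g w) = pos_word_prod dS (\<lambda>j x. mat_adjoint (U_entry (M - 1 - (length w - 1 - j)) x)) (rev w)"
      by (rule pos_word_prod_adjoint) simp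
    also have "\<dots> = pos_word_prod dS (\<lambda>j x. mat_adjoint (U_entry j x)) (rev w)"
      by (rule pos_word_prod_cong) (simp add: len)
    finally show ?thesis
      using adjoint_words_mat_span_deformed[of "rev w"] w by (simp add: rev_in_pos_words_iff)
  qed
  obtain m where sp: "word_spanning dS ?h (pos_words env_pairs M) m"
    using primitive_cp_transfer[OF ER kraus_rep_cyclic fg kraus_rep_cyclic_deformed gh fin cg] by blast
  have nz: "\<exists>w\<in>pos_words env_pairs M. ?h w \<noteq> 0\<^sub>m 1 1" if dS1: "dS = 1"
  proof -
    obtain v where v: "v \<in> pos_words env_pairs M"
      "pos_word_prod dS (\<lambda>j x. mat_adjoint (U_entry j x)) v \<noteq> 0\<^sub>m dS dS"
      using adjoint_word_nonzero_1_dim[OF dS1] by blast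
    from mat_span_nonzero[OF adjoint_words_mat_span_deformed[OF v(1)] v(2)] show ?thesis using dS1 by simp
  qed
  show ?thesis
    using kraus_rep_primitive_cp[OF kraus_rep_cyclic_deformed sp]
      kraus_rep_spectral_radius_pos[OF kraus_rep_cyclic_deformed sp dS nz] by simp
qed

lemma primitive_random:
  assumes ER: "primitive_cp dS (Lsh Ra M dS dE HS HE V \<tau> \<beta> \<zeta>0)"
  shows "primitive_cp dS (Lshd Ra M dS dE HS HE V \<tau> \<beta> \<zeta> \<alpha>)
    \<and> map_spectral_radius dS (Lshd Ra M dS dE HS HE V \<tau> \<beta> \<zeta> \<alpha>) > 0"
proof -
  let ?c = "complex_of_real (1 / sqrt (real M))" and ?S = "Sigma {..<M} env_pairs"
  let ?g = "\<lambda>p. U_entry (fst p) (snd p)" and ?h = "\<lambda>p. ?c \<cdot>\<^sub>m kraus_L_deformed \<zeta> \<alpha> (fst p) (snd p)"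
  have c: "?c \<noteq> 0" using M by simp
  have fin: "finite ?S" by simp
  have entry_span: "U_entry j q \<in> mat_span dS ?g ?S" if "j < M" "q \<in> env_pairs j" for j q
    using mat_span_generator[OF fin, of "(j,q)" ?g dS] that by simp
  have deformed_span: "kraus_L_deformed \<zeta> \<alpha> j q \<in> mat_span dS ?h ?S" if "j < M" "q \<in> env_pairs j" for j q
  proof -
    have "(1 / ?c) \<cdot>\<^sub>m ?h (j,q) \<in> mat_span dS ?h ?S"
      using that by (intro mat_span_smult mat_span_generator[OF fin]) simp_all
    moreover have "(1 / ?c) \<cdot>\<^sub>m ?h (j,q) = kraus_L_deformed \<zeta> \<alpha> j q"
      using c by (simp add: smult_smult_mat one_smult_mat)
    ultimately show ?thesis by simp
  qed
  have fg: "?c \<cdot>\<^sub>m kraus_L \<zeta>0 (fst p) (snd p) \<in> mat_span dS ?g ?S" if "p \<in> ?S" for p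
    using that by (intro mat_span_smult mat_span_trans[OF _ fin entry_span kraus_L_mat_span]) auto
  have gh: "mat_adjoint (?g p) \<in> mat_span dS ?h ?S" if "p \<in> ?S" for p
    using that by (intro mat_span_trans[OF _ fin deformed_span adjoint_U_entry_mat_span]) auto
  obtain m where sp: "word_spanning dS ?h ?S m"
    using primitive_cp_transfer[OF ER kraus_rep_random fg kraus_rep_random_deformed gh fin] by auto
  have nz: "\<exists>p\<in>?S. ?h p \<noteq> 0\<^sub>m 1 1" if dS1: "dS = 1"
  proof -
    have "0 < M" using M by simp
    then obtain q where q: "q \<in> env_pairs 0" "U_entry 0 q \<noteq> 0\<^sub>m dS dS" using U_entry_nonzero by blast
    have "mat_adjoint (U_entry 0 q) \<in> mat_span dS ?h ?S" using gh[of "(0, q)"] q \<open>0 < M\<close> by simp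
    moreover have "mat_adjoint (U_entry 0 q) \<noteq> 0\<^sub>m dS dS" using q by simp
    ultimately show ?thesis using mat_span_nonzero[of _ dS ?h ?S] dS1 by simp
  qed
  show ?thesis
    using kraus_rep_primitive_cp[OF kraus_rep_random_deformed sp]
      kraus_rep_spectral_radius_pos[OF kraus_rep_random_deformed sp dS nz] by simp
qed

end

theorem mainTheorem17:
  fixes M dS :: nat and dE :: "nat \<Rightarrow> nat"
    and HS :: "complex mat" and HE V :: "nat \<Rightarrow> complex mat"
    and \<tau> :: "nat \<Rightarrow> real" and \<beta>ref :: real and sh :: scheme
  assumes "M \<ge> 1" and "dS > 0" and "\<forall>j<M. dE j > 0"
    and "self_adjoint dS HS"
    and "\<forall>j<M. self_adjoint (dE j) (HE j)"
    and "\<forall>j<M. self_adjoint (dS * dE j) (V j)"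
    and "\<forall>j<M. \<tau> j > 0"
    and "\<beta>ref > 0"
    and ER: "\<exists>\<zeta>. primitive_cp dS (Lsh sh M dS dE HS HE V \<tau> \<beta>ref \<zeta>)"
  shows "\<forall>\<zeta> \<alpha>. primitive_cp dS (Lshd sh M dS dE HS HE V \<tau> \<beta>ref \<zeta> \<alpha>)
            \<and> map_spectral_radius dS (Lshd sh M dS dE HS HE V \<tau> \<beta>ref \<zeta> \<alpha>) > 0"
proof (intro allI)
  fix \<zeta> \<alpha> :: "nat \<Rightarrow> real"
  interpret repeated_interaction M dS dE HS HE V \<tau> \<beta>ref
    using assms(1-6) by unfold_locales auto
  from ER obtain \<zeta>0 where "primitive_cp dS (Lsh sh M dS dE HS HE V \<tau> \<beta>ref \<zeta>0)" by blast
  thus "primitive_cp dS (Lshd sh M dS dE HS HE V \<tau> \<beta>ref \<zeta> \<alpha>)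
      \<and> map_spectral_radius dS (Lshd sh M dS dE HS HE V \<tau> \<beta>ref \<zeta> \<alpha>) > 0"
    by (cases sh) (simp_all add: primitive_cyclic primitive_random)
qed

end
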